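(* Let $(G,H)$ be a Hecke pair and let $N$ be a closed normal subgroup of $G$ contained in $H$. Put $G'=G/N$ and $H'=H/N$. Then $(G,H)$ has property (RD) if and only if the Hecke pair $(G',H')$ has property (RD). In particular, a discrete Hecke pair $(G,H)$ has property (RD) if and only if its reduction $(G/K_{(G,H)},H/K_{(G,H)})$, where $K_{(G,H)}=\bigcap_{x\in G}xHx^{-1}$, has property (RD).
   Context: Let $G$ be a locally compact group (possibly discrete) with closed subgroup $H$. If $H\backslash G$ is not discrete, one assumes $\Delta_G|_H=\Delta_H=1$, so there is a right $G$-invariant measure $\nu$ on $H\backslash G$ satisfying Weil's formula; in the discrete case $\nu$ is counting measure. $\mathcal H(G,H)$ is the space of compactly supported continuous right $H$-invariant functions on $H\backslash G$ with product $f*g(Hx)=\int_{H\backslash G}f(Hxy^{-1})g(Hy)\,d\nu(Hy)$ and left regular representation $\lambda(f)\xi=f*\xi$ on $L^2(H\backslash G,\nu)$. In the discrete case $(G,H)$ is a Hecke pair if $[H:H\cap xHx^{-1}]<\infty$ for all $x$; in the non-discrete case, if $\lambda$ is a well-defined homomorphism into bounded operators and every $Hx$ has some $f\in\mathcal H(G,H)$ with $f(Hx)\neq0$. (Under these hypotheses $(G',H')$ is again a Hecke pair.) A length function on $(G,H)$ is a Borel $l:G\to[0,\infty)$ with $l(e)=0$, $l(g)=l(g^{-1})$, $l(gh)\le l(g)+l(h)$, $l|_H=0$; locally bounded means the induced function on $H\backslash G$ is bounded on compact sets. $(G,H)$ has property (RD) if there are a locally bounded length function $l$ on $(G,H)$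 and $s,c>0$ with $\|\lambda(f)\|\le c\big(\int_{H\backslash G}|f(Hx)|^2(1+l(x))^{2s}d\nu(Hx)\big)^{1/2}$ for all $f\in\mathcal H(G,H)$. *)

theory Defs
  imports "HOL-Analysis.Analysis" "HOL-Algebra.Coset"
begin

definition lc_group :: "('a, 'b) monoid_scheme \<Rightarrow> 'a topology \<Rightarrow> bool" where
  "lc_group G T \<longleftrightarrow> group G \<and> topspace T = carrier G
     \<and> continuous_map (prod_topology T T) T (\<lambda>(x, y). x \<otimes>\<^bsub>G\<^esub> y)
     \<and> continuous_map T T (\<lambda>x. inv\<^bsub>G\<^esub> x)
     \<and> Hausdorff_space T \<and> locally_compact_space T"

definition quot_top :: "('a, 'b) monoid_scheme \<Rightarrow> 'a topology \<Rightarrow> 'a set \<Rightarrow> 'a set topology" where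
  "quot_top G T H = topology (\<lambda>U. U \<subseteq> rcosets\<^bsub>G\<^esub> H \<and> openin T (\<Union>U))"

definition quot_discrete :: "('a, 'b) monoid_scheme \<Rightarrow> 'a topology \<Rightarrow> 'a set \<Rightarrow> bool" where
  "quot_discrete G T H \<longleftrightarrow> (\<forall>C \<in> rcosets\<^bsub>G\<^esub> H. openin (quot_top G T H) {C})"

definition coset_rep :: "('a, 'b) monoid_scheme \<Rightarrow> 'a set \<Rightarrow> 'a set \<Rightarrow> 'a" where
  "coset_rep G H C = (SOME x. x \<in> carrier G \<and> C = H #>\<^bsub>G\<^esub> x)"

definition borel_of :: "'a topology \<Rightarrow> 'a measure" where
  "borel_of X = sigma (topspace X) {U. openin X U}"

definition radon_measure :: "'a topology \<Rightarrow> 'a measure \<Rightarrow> bool" where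
  "radon_measure X \<mu> \<longleftrightarrow> sets \<mu> = sets (borel_of X)
     \<and> (\<forall>K. compactin X K \<longrightarrow> emeasure \<mu> K < \<infinity>)
     \<and> (\<forall>A \<in> sets \<mu>. emeasure \<mu> A = (INF U \<in> {U. openin X U \<and> A \<subseteq> U}. emeasure \<mu> U))
     \<and> (\<forall>U. openin X U \<longrightarrow> emeasure \<mu> U = (SUP K \<in> {K. compactin X K \<and> K \<subseteq> U}. emeasure \<mu> K))"

text \<open>Standing assumption of the non-discrete case: Delta_G restricted to H is 1 and
  Delta_H = 1. Expressed without modular functions: some left Haar measure of G is
  invariant under right translation by elements of H, and some left Haar measure of H
  is also right invariant.\<close>
definition unimodular_cond :: "('a, 'b) monoid_scheme \<Rightarrow> 'a topology \<Rightarrow> 'a set \<Rightarrow> bool" where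
  "unimodular_cond G T H \<longleftrightarrow>
     (\<exists>\<mu>. radon_measure T \<mu> \<and> emeasure \<mu> (space \<mu>) \<noteq> 0
        \<and> (\<forall>x \<in> carrier G. \<forall>A \<in> sets \<mu>. emeasure \<mu> ((\<lambda>y. x \<otimes>\<^bsub>G\<^esub> y) ` A) = emeasure \<mu> A)
        \<and> (\<forall>h \<in> H. \<forall>A \<in> sets \<mu>. emeasure \<mu> ((\<lambda>y. y \<otimes>\<^bsub>G\<^esub> h) ` A) = emeasure \<mu> A))
   \<and> (\<exists>\<mu>. radon_measure (subtopology T H) \<mu> \<and> emeasure \<mu> (space \<mu>) \<noteq> 0
        \<and> (\<forall>x \<in> H. \<forall>A \<in> sets \<mu>. emeasure \<mu> ((\<lambda>y. x \<otimes>\<^bsub>G\<^esub> y) ` A) = emeasure \<mu> A)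
        \<and> (\<forall>h \<in> H. \<forall>A \<in> sets \<mu>. emeasure \<mu> ((\<lambda>y. y \<otimes>\<^bsub>G\<^esub> h) ` A) = emeasure \<mu> A))"

text \<open>The measure nu on H\G: counting measure if H\G is discrete; otherwise a nonzero
  right G-invariant Radon measure (such a measure is unique up to a positive scalar,
  so it is the Weil measure up to normalisation).\<close>
definition quot_measure :: "('a, 'b) monoid_scheme \<Rightarrow> 'a topology \<Rightarrow> 'a set \<Rightarrow> 'a set measure \<Rightarrow> bool" where
  "quot_measure G T H \<nu> \<longleftrightarrow>
     (if quot_discrete G T H then \<nu> = count_space (rcosets\<^bsub>G\<^esub> H)
      else radon_measure (quot_top G T H) \<nu> \<and> emeasure \<nu> (space \<nu>) \<noteq> 0
        \<and> (\<forall>g \<in> carrier G. \<forall>A \<in> sets \<nu>.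
              emeasure \<nu> ((\<lambda>C. C #>\<^bsub>G\<^esub> g) ` A) = emeasure \<nu> A))"

definition hecke_alg :: "('a, 'b) monoid_scheme \<Rightarrow> 'a topology \<Rightarrow> 'a set \<Rightarrow> ('a set \<Rightarrow> complex) set" where
  "hecke_alg G T H = {f. continuous_map (quot_top G T H) euclidean f
      \<and> (\<exists>K. compactin (quot_top G T H) K \<and> (\<forall>C \<in> rcosets\<^bsub>G\<^esub> H - K. f C = 0))
      \<and> (\<forall>C \<in> rcosets\<^bsub>G\<^esub> H. \<forall>h \<in> H. f (C #>\<^bsub>G\<^esub> h) = f C)}"

definition hconv :: "('a, 'b) monoid_scheme \<Rightarrow> 'a set \<Rightarrow> 'a set measure
      \<Rightarrow> ('a set \<Rightarrow> complex) \<Rightarrow> ('a set \<Rightarrow> complex) \<Rightarrow> 'a set \<Rightarrow> complex" where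
  "hconv G H \<nu> f \<xi> C = (LINT D|\<nu>. f (C #>\<^bsub>G\<^esub> inv\<^bsub>G\<^esub> (coset_rep G H D)) * \<xi> D)"

definition L2set :: "'c measure \<Rightarrow> ('c \<Rightarrow> complex) set" where
  "L2set \<nu> = {\<xi>. \<xi> \<in> borel_measurable \<nu> \<and> integrable \<nu> (\<lambda>D. (cmod (\<xi> D))\<^sup>2)}"

definition l2norm :: "'c measure \<Rightarrow> ('c \<Rightarrow> complex) \<Rightarrow> real" where
  "l2norm \<nu> \<xi> = sqrt (LINT D|\<nu>. (cmod (\<xi> D))\<^sup>2)"

definition lambda_norm :: "('a, 'b) monoid_scheme \<Rightarrow> 'a set \<Rightarrow> 'a set measure \<Rightarrow> ('a set \<Rightarrow> complex) \<Rightarrow> real" where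
  "lambda_norm G H \<nu> f = Inf {M. 0 \<le> M \<and> (\<forall>\<xi> \<in> L2set \<nu>. l2norm \<nu> (hconv G H \<nu> f \<xi>) \<le> M * l2norm \<nu> \<xi>)}"

text \<open>lambda is a well-defined homomorphism from H(G,H) into bounded operators on L^2.\<close>
definition lambda_ok :: "('a, 'b) monoid_scheme \<Rightarrow> 'a topology \<Rightarrow> 'a set \<Rightarrow> 'a set measure \<Rightarrow> bool" where
  "lambda_ok G T H \<nu> \<longleftrightarrow>
     (\<forall>f \<in> hecke_alg G T H. \<forall>\<xi> \<in> L2set \<nu>.
        (AE C in \<nu>. integrable \<nu> (\<lambda>D. f (C #>\<^bsub>G\<^esub> inv\<^bsub>G\<^esub> (coset_rep G H D)) * \<xi> D))
        \<and> hconv G H \<nu> f \<xi> \<in> L2set \<nu>)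
   \<and> (\<forall>f \<in> hecke_alg G T H. \<exists>M. \<forall>\<xi> \<in> L2set \<nu>.
        l2norm \<nu> (hconv G H \<nu> f \<xi>) \<le> M * l2norm \<nu> \<xi>)
   \<and> (\<forall>f \<in> hecke_alg G T H. \<forall>g \<in> hecke_alg G T H. \<forall>\<xi> \<in> L2set \<nu>.
        AE C in \<nu>. hconv G H \<nu> (hconv G H \<nu> f g) \<xi> C = hconv G H \<nu> f (hconv G H \<nu> g \<xi>) C)"

definition hecke_pair :: "('a, 'b) monoid_scheme \<Rightarrow> 'a topology \<Rightarrow> 'a set \<Rightarrow> bool" where
  "hecke_pair G T H \<longleftrightarrow> lc_group G T \<and> subgroup H G \<and> closedin T H \<and>
     (if quot_discrete G T H then
        (\<forall>x \<in> carrier G. finite ((\<lambda>h. (H \<inter> (x <#\<^bsub>G\<^esub> H #>\<^bsub>G\<^esub> inv\<^bsub>G\<^esub> x)) #>\<^bsub>G\<^esub> h) ` H))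
      else unimodular_cond G T H \<and>
        (\<exists>\<nu>. quot_measure G T H \<nu> \<and> lambda_ok G T H \<nu>
             \<and> (\<forall>C \<in> rcosets\<^bsub>G\<^esub> H. \<exists>f \<in> hecke_alg G T H. f C \<noteq> 0)))"

definition length_fn :: "('a, 'b) monoid_scheme \<Rightarrow> 'a topology \<Rightarrow> 'a set \<Rightarrow> ('a \<Rightarrow> real) \<Rightarrow> bool" where
  "length_fn G T H l \<longleftrightarrow> l \<in> borel_measurable (borel_of T)
     \<and> (\<forall>x \<in> carrier G. 0 \<le> l x)
     \<and> l \<one>\<^bsub>G\<^esub> = 0
     \<and> (\<forall>x \<in> carrier G. l (inv\<^bsub>G\<^esub> x) = l x)
     \<and> (\<forall>x \<in> carrier G. \<forall>y \<in> carrier G. l (x \<otimes>\<^bsub>G\<^esub> y) \<le> l x + l y)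
     \<and> (\<forall>h \<in> H. l h = 0)"

text \<open>The induced function on H\G (well defined for length functions) is bounded on compacta.\<close>
definition locally_bounded_len :: "('a, 'b) monoid_scheme \<Rightarrow> 'a topology \<Rightarrow> 'a set \<Rightarrow> ('a \<Rightarrow> real) \<Rightarrow> bool" where
  "locally_bounded_len G T H l \<longleftrightarrow>
     (\<forall>K. compactin (quot_top G T H) K \<longrightarrow> (\<exists>B. \<forall>C \<in> K. l (coset_rep G H C) \<le> B))"

definition has_RD :: "('a, 'b) monoid_scheme \<Rightarrow> 'a topology \<Rightarrow> 'a set \<Rightarrow> bool" where
  "has_RD G T H \<longleftrightarrow> (\<exists>\<nu>. quot_measure G T H \<nu> \<and>
     (\<exists>l s c. length_fn G T H l \<and> locally_bounded_len G T H l \<and> s > 0 \<and> c > 0 \<and>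
        (\<forall>f \<in> hecke_alg G T H.
           lambda_norm G H \<nu> f \<le>
             c * sqrt (LINT C|\<nu>. (cmod (f C))\<^sup>2 * (1 + l (coset_rep G H C)) powr (2 * s)))))"

definition quot_sub :: "('a, 'b) monoid_scheme \<Rightarrow> 'a set \<Rightarrow> 'a set \<Rightarrow> 'a set set" where
  "quot_sub G N H = (\<lambda>h. N #>\<^bsub>G\<^esub> h) ` H"

end

theory Submission
  imports Defs
begin

text \<open>Since \<open>N \<subseteq> H\<close>, the map \<open>Hx \<mapsto> H'(Nx)\<close> is a homeomorphism
  \<open>H\G \<cong> H'\G'\<close> intertwining the right actions of \<open>G\<close> and \<open>G'\<close>. It carries the measure,
  the Hecke algebra and the operators \<open>\<lambda>(f)\<close> of one pair to those of the other, so the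
  (RD) inequality transfers verbatim once the length functions are matched. A length
  function on \<open>G'\<close> pulls back along \<open>G \<rightarrow> G'\<close>. Conversely a length function \<open>l\<close> on \<open>G\<close>
  vanishes on \<open>H \<supseteq> N\<close>, hence is \<open>N\<close>-invariant and descends to \<open>G'\<close>; to keep the descended
  function Borel we first replace \<open>l\<close> by its upper semicontinuous envelope (made zero on
  \<open>H\<close>), which is again a length function, is still locally bounded, and only enlarges
  the right-hand side of the (RD) inequality.
  The reduction statement is the case where \<open>N\<close> is the normal core of \<open>H\<close>.\<close>

section \<open>Borel sets of a topology\<close>

lemma Collect_openin_subset_Pow: "{U. openin X U} \<subseteq> Pow (topspace X)"
  using openin_subset by blast

lemma space_borel_of [simp]: "space (borel_of X) = topspace X"
  unfolding borel_of_def by (simp add: space_measure_of[OF Collect_openin_subset_Pow])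

lemma sets_borel_of: "sets (borel_of X) = sigma_sets (topspace X) {U. openin X U}"
  unfolding borel_of_def by (simp add: sets_measure_of[OF Collect_openin_subset_Pow])

lemma openin_borel_of: "openin X U \<Longrightarrow> U \<in> sets (borel_of X)"
  unfolding sets_borel_of by auto

lemma closedin_borel_of:
  assumes "closedin X U"
  shows "U \<in> sets (borel_of X)"
proof -
  have "openin X (topspace X - U)" "U \<subseteq> topspace X" using assms by (auto simp: closedin_def)
  then have "topspace X - (topspace X - U) \<in> sets (borel_of X)"
    using openin_borel_of sets.compl_sets by blast
  moreover have "topspace X - (topspace X - U) = U" using \<open>U \<subseteq> _\<close> by blast
  ultimately show ?thesis by simp
qed

lemma continuous_map_measurable:
  assumes "continuous_map X Y f"
  shows "f \<in> borel_of X \<rightarrow>\<^sub>M borel_of Y"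
  unfolding borel_of_def[of Y]
proof (rule measurable_measure_of[OF Collect_openin_subset_Pow])
  show "f \<in> space (borel_of X) \<rightarrow> topspace Y"
    using assms by (simp add: continuous_map_def)
  fix U assume "U \<in> {U. openin Y U}"
  then have "openin X {x \<in> topspace X. f x \<in> U}"
    using assms by (simp add: openin_continuous_map_preimage)
  moreover have "f -` U \<inter> space (borel_of X) = {x \<in> topspace X. f x \<in> U}" by auto
  ultimately show "f -` U \<inter> space (borel_of X) \<in> sets (borel_of X)"
    by (simp add: openin_borel_of)
qed

lemma continuous_map_borel_measurable:
  assumes "continuous_map X euclidean f"
  shows "f \<in> borel_measurable (borel_of X)"
proof (rule borel_measurableI)
  fix S :: "'b set" assume "open S"
  then have "openin X {x \<in> topspace X. f x \<in> S}"
    using assms by (simp add: openin_continuous_map_preimage)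
  moreover have "f -` S \<inter> space (borel_of X) = {x \<in> topspace X. f x \<in> S}" by auto
  ultimately show "f -` S \<inter> space (borel_of X) \<in> sets (borel_of X)"
    by (simp add: openin_borel_of)
qed

lemma sets_borel_of_discrete:
  assumes "\<And>U. U \<subseteq> topspace X \<Longrightarrow> openin X U"
  shows "sets (borel_of X) = Pow (topspace X)"
proof
  show "sets (borel_of X) \<subseteq> Pow (topspace X)"
    using sets.sets_into_space[of _ "borel_of X"] by auto
  show "Pow (topspace X) \<subseteq> sets (borel_of X)"
    using assms openin_borel_of by blast
qed


section \<open>The coset space \<open>H\G\<close>\<close>

lemma istopology_quot_top:
  assumes "group G" "subgroup H G"
  shows "istopology (\<lambda>U. U \<subseteq> rcosets\<^bsub>G\<^esub> H \<and> openin T (\<Union>U))"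
  unfolding istopology_def
proof (rule conjI; intro allI impI ballI)
  fix S S' assume S: "S \<subseteq> rcosets\<^bsub>G\<^esub> H \<and> openin T (\<Union>S)"
    and S': "S' \<subseteq> rcosets\<^bsub>G\<^esub> H \<and> openin T (\<Union>S')"
  have disj: "pairwise disjnt (rcosets\<^bsub>G\<^esub> H)"
    using group.rcos_disjoint[OF assms] .
  have "\<Union>(S \<inter> S') = \<Union>S \<inter> \<Union>S'"
  proof
    show "\<Union>S \<inter> \<Union>S' \<subseteq> \<Union>(S \<inter> S')"
    proof
      fix x assume "x \<in> \<Union>S \<inter> \<Union>S'"
      then obtain A B where AB: "A \<in> S" "B \<in> S'" "x \<in> A" "x \<in> B" by blast
      then have "A = B" using disj S S' unfolding pairwise_def disjnt_def by blast
      then show "x \<in> \<Union>(S \<inter> S')" using AB by blast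
    qed
  qed blast
  then show "S \<inter> S' \<subseteq> rcosets\<^bsub>G\<^esub> H \<and> openin T (\<Union>(S \<inter> S'))"
    using S S' by auto
next
  fix K assume "\<forall>S\<in>K. S \<subseteq> rcosets\<^bsub>G\<^esub> H \<and> openin T (\<Union>S)"
  moreover have "\<Union>(\<Union>K) = \<Union>((\<lambda>S. \<Union>S) ` K)" by blast
  ultimately show "\<Union>K \<subseteq> rcosets\<^bsub>G\<^esub> H \<and> openin T (\<Union>(\<Union>K))"
    by (metis (no_types, lifting) Sup_least image_iff openin_Union)
qed

lemma openin_quot_top:
  assumes "group G" "subgroup H G"
  shows "openin (quot_top G T H) U \<longleftrightarrow> U \<subseteq> rcosets\<^bsub>G\<^esub> H \<and> openin T (\<Union>U)"
  unfolding quot_top_def using topology_inverse'[OF istopology_quot_top[OF assms]] by simp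

lemma topspace_quot_top:
  assumes "group G" "subgroup H G" "topspace T = carrier G"
  shows "topspace (quot_top G T H) = rcosets\<^bsub>G\<^esub> H"
proof -
  have "openin (quot_top G T H) (rcosets\<^bsub>G\<^esub> H)"
    using assms group.rcosets_part_G[OF assms(1,2)] by (metis openin_quot_top openin_topspace order_refl)
  then have "rcosets\<^bsub>G\<^esub> H \<subseteq> topspace (quot_top G T H)" by (rule openin_subset)
  moreover have "topspace (quot_top G T H) \<subseteq> rcosets\<^bsub>G\<^esub> H"
    using openin_quot_top[OF assms(1,2)] openin_topspace by blast
  ultimately show ?thesis by blast
qed

lemma rcos_eq_iff_mult_inv:
  fixes G (structure)
  assumes "group G" "subgroup H G" "x \<in> carrier G" "y \<in> carrier G"
  shows "H #>\<^bsub>G\<^esub> x = H #>\<^bsub>G\<^esub> y \<longleftrightarrow> x \<otimes>\<^bsub>G\<^esub> inv\<^bsub>G\<^esub> y \<in> H"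
proof -
  interpret group G by fact
  have "H #> x = H #> y \<longleftrightarrow> x \<in> H #> y"
    using assms by (metis repr_independence rcos_self)
  also have "\<dots> \<longleftrightarrow> x \<otimes> inv y \<in> H"
    using subgroup.rcos_module[OF assms(2,1,4,3)] .
  finally show ?thesis .
qed

lemma rcos_of_mem_rcosets:
  fixes G (structure)
  assumes "group G" "subgroup H G" "C \<in> rcosets\<^bsub>G\<^esub> H" "y \<in> C"
  shows "C = H #>\<^bsub>G\<^esub> y"
proof -
  interpret group G by fact
  obtain x where x: "x \<in> carrier G" "C = H #> x" using assms(3) unfolding RCOSETS_def by blast
  then show ?thesis using assms repr_independence by blast
qed

lemma rcosets_r_coset_closed:
  fixes G (structure)
  assumes "group G" "subgroup H G" "C \<in> rcosets\<^bsub>G\<^esub> H" "g \<in> carrier G"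
  shows "C #>\<^bsub>G\<^esub> g \<in> rcosets\<^bsub>G\<^esub> H"
proof -
  interpret group G by fact
  obtain x where x: "x \<in> carrier G" "C = H #> x" using assms(3) unfolding RCOSETS_def by blast
  then have "C #> g = H #> (x \<otimes> g)"
    using assms coset_mult_assoc subgroup.subset by blast
  then show ?thesis using x assms rcosetsI subgroup.subset by (metis m_closed)
qed

lemma coset_rep:
  fixes G (structure)
  assumes "group G" "subgroup H G" "C \<in> rcosets\<^bsub>G\<^esub> H"
  shows "coset_rep G H C \<in> carrier G" "C = H #>\<^bsub>G\<^esub> coset_rep G H C"
    "coset_rep G H C \<in> C"
proof -
  interpret group G by fact
  have ex: "\<exists>x. x \<in> carrier G \<and> C = H #> x" using assms(3) unfolding RCOSETS_def by blast
  show c: "coset_rep G H C \<in> carrier G" "C = H #> coset_rep G H C"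
    unfolding coset_rep_def using someI_ex[OF ex] by auto
  then show "coset_rep G H C \<in> C" using rcos_self assms by metis
qed

lemma coset_rep_r_coset:
  fixes G (structure)
  assumes "group G" "subgroup H G" "x \<in> carrier G"
  shows "\<exists>h\<in>H. coset_rep G H (H #>\<^bsub>G\<^esub> x) = h \<otimes>\<^bsub>G\<^esub> x"
proof -
  interpret group G by fact
  have C: "H #> x \<in> rcosets H" using assms rcosetsI subgroup.subset by blast
  have "coset_rep G H (H #> x) \<in> H #> x" using coset_rep(3)[OF assms(1,2) C] .
  then show ?thesis unfolding r_coset_def by blast
qed


lemma rcos_subset_iff_mem:
  fixes G (structure)
  assumes "group G" "subgroup H G" "subgroup K G" "K \<subseteq> H" "C \<in> rcosets K" "x \<in> C"
  shows "C \<subseteq> H \<longleftrightarrow> x \<in> H"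
proof -
  interpret group G by fact
  have C: "C = K #> x" using rcos_of_mem_rcosets[OF assms(1,3,5,6)] .
  show ?thesis
  proof
    assume "x \<in> H"
    show "C \<subseteq> H"
    proof
      fix z assume "z \<in> C"
      then obtain k where "k \<in> K" "z = k \<otimes> x" using C unfolding r_coset_def by blast
      then show "z \<in> H" using \<open>x \<in> H\<close> assms(4) subgroup.m_closed[OF assms(2)] by blast
    qed
  qed (use assms(6) in blast)
qed
section \<open>Locally compact groups and their coset spaces\<close>

lemma compactin_bounded_above:
  fixes f :: "'a \<Rightarrow> real"
  assumes K: "compactin X K"
    and loc: "\<And>x. x \<in> K \<Longrightarrow> \<exists>U b. openin X U \<and> x \<in> U \<and> (\<forall>y\<in>U. f y \<le> b)"
  shows "\<exists>B. \<forall>x\<in>K. f x \<le> B"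
proof -
  have "\<forall>x\<in>K. \<exists>p. openin X (fst p) \<and> x \<in> fst p \<and> (\<forall>y\<in>fst p. f y \<le> snd p)"
  proof
    fix x assume "x \<in> K"
    then obtain U b where "openin X U" "x \<in> U" "\<forall>y\<in>U. f y \<le> b" using loc by blast
    then show "\<exists>p. openin X (fst p) \<and> x \<in> fst p \<and> (\<forall>y\<in>fst p. f y \<le> snd p)"
      by (intro exI[of _ "(U, b)"]) simp
  qed
  then have "\<exists>p. \<forall>x\<in>K. openin X (fst (p x)) \<and> x \<in> fst (p x) \<and> (\<forall>y\<in>fst (p x). f y \<le> snd (p x))"
    by (rule bchoice)
  then obtain p where p: "\<forall>x\<in>K. openin X (fst (p x)) \<and> x \<in> fst (p x) \<and> (\<forall>y\<in>fst (p x). f y \<le> snd (p x))" ..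
  have "\<forall>\<U>. (\<forall>U\<in>\<U>. openin X U) \<and> K \<subseteq> \<Union>\<U> \<longrightarrow> (\<exists>\<F>. finite \<F> \<and> \<F> \<subseteq> \<U> \<and> K \<subseteq> \<Union>\<F>)"
    using K unfolding compactin_def by (rule conjunct2)
  moreover have "\<forall>U\<in>(\<lambda>x. fst (p x)) ` K. openin X U" "K \<subseteq> \<Union>((\<lambda>x. fst (p x)) ` K)"
    using p by auto
  ultimately have "\<exists>F. finite F \<and> F \<subseteq> (\<lambda>x. fst (p x)) ` K \<and> K \<subseteq> \<Union>F"
    by (metis (no_types, lifting))
  then obtain F where F: "finite F" "F \<subseteq> (\<lambda>x. fst (p x)) ` K" "K \<subseteq> \<Union>F" by blast
  then obtain K0 where K0: "K0 \<subseteq> K" "finite K0" "F = (\<lambda>x. fst (p x)) ` K0"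
    by (metis finite_subset_image)
  have "f x \<le> Max (insert 0 ((\<lambda>x. snd (p x)) ` K0))" if x: "x \<in> K" for x
  proof -
    obtain V where "V \<in> F" "x \<in> V" using F(3) x by blast
    then obtain x0 where x0: "x0 \<in> K0" "x \<in> fst (p x0)" using K0(3) by blast
    then have "f x \<le> snd (p x0)" using p K0 by blast
    also have "\<dots> \<le> Max (insert 0 ((\<lambda>x. snd (p x)) ` K0))" using K0 x0 by (intro Max_ge) auto
    finally show ?thesis .
  qed
  then show ?thesis by blast
qed

lemma lc_groupD:
  fixes G (structure)
  assumes "lc_group G T"
  shows "group G" "topspace T = carrier G" "Hausdorff_space T" "locally_compact_space T"
    "continuous_map (prod_topology T T) T (\<lambda>(x, y). x \<otimes>\<^bsub>G\<^esub> y)"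
    "continuous_map T T (\<lambda>x. inv\<^bsub>G\<^esub> x)"
  using assms unfolding lc_group_def by auto

lemma continuous_map_left_translation:
  fixes G (structure)
  assumes "lc_group G T" "a \<in> carrier G"
  shows "continuous_map T T (\<lambda>y. a \<otimes>\<^bsub>G\<^esub> y)"
proof -
  have "continuous_map T (prod_topology T T) (\<lambda>y. (a, y))"
    using assms lc_groupD(2)[OF assms(1)]
    by (intro continuous_map_pairedI) (auto simp: continuous_map_const)
  from continuous_map_compose[OF this lc_groupD(5)[OF assms(1)]]
  show ?thesis by (simp add: o_def)
qed

lemma continuous_map_right_translation:
  fixes G (structure)
  assumes "lc_group G T" "a \<in> carrier G"
  shows "continuous_map T T (\<lambda>y. y \<otimes>\<^bsub>G\<^esub> a)"
proof -
  have "continuous_map T (prod_topology T T) (\<lambda>y. (y, a))"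
    using assms lc_groupD(2)[OF assms(1)]
    by (intro continuous_map_pairedI) (auto simp: continuous_map_const)
  from continuous_map_compose[OF this lc_groupD(5)[OF assms(1)]]
  show ?thesis by (simp add: o_def)
qed

lemma openin_left_translation:
  fixes G (structure)
  assumes "lc_group G T" "a \<in> carrier G" "openin T U"
  shows "openin T ((\<lambda>y. a \<otimes>\<^bsub>G\<^esub> y) ` U)"
proof -
  interpret group G using lc_groupD[OF assms(1)] by simp
  have U: "U \<subseteq> carrier G" using openin_subset[OF assms(3)] lc_groupD(2)[OF assms(1)] by simp
  have "(\<lambda>y. a \<otimes> y) ` U = {y \<in> topspace T. inv a \<otimes> y \<in> U}"
  proof (rule Set.set_eqI, rule iffI)
    fix z assume "z \<in> (\<lambda>y. a \<otimes> y) ` U"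
    then obtain y where "y \<in> U" "z = a \<otimes> y" by blast
    then show "z \<in> {y \<in> topspace T. inv a \<otimes> y \<in> U}"
      using U assms lc_groupD(2)[OF assms(1)] by (auto simp: m_assoc[symmetric])
  next
    fix z assume "z \<in> {y \<in> topspace T. inv a \<otimes> y \<in> U}"
    then have "z \<in> carrier G" "inv a \<otimes> z \<in> U" using lc_groupD(2)[OF assms(1)] by auto
    moreover have "z = a \<otimes> (inv a \<otimes> z)" using \<open>z \<in> carrier G\<close> assms(2) by (simp add: m_assoc[symmetric])
    ultimately show "z \<in> (\<lambda>y. a \<otimes> y) ` U" by blast
  qed
  then show ?thesis
    using openin_continuous_map_preimage[OF continuous_map_left_translation[OF assms(1) inv_closed[OF assms(2)]] assms(3)] by simp
qed

lemma openin_right_translation: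
  fixes G (structure)
  assumes "lc_group G T" "a \<in> carrier G" "openin T U"
  shows "openin T ((\<lambda>y. y \<otimes>\<^bsub>G\<^esub> a) ` U)"
proof -
  interpret group G using lc_groupD[OF assms(1)] by simp
  have U: "U \<subseteq> carrier G" using openin_subset[OF assms(3)] lc_groupD(2)[OF assms(1)] by simp
  have "(\<lambda>y. y \<otimes> a) ` U = {y \<in> topspace T. y \<otimes> inv a \<in> U}"
  proof (rule Set.set_eqI, rule iffI)
    fix z assume "z \<in> (\<lambda>y. y \<otimes> a) ` U"
    then obtain y where "y \<in> U" "z = y \<otimes> a" by blast
    then show "z \<in> {y \<in> topspace T. y \<otimes> inv a \<in> U}"
      using U assms lc_groupD(2)[OF assms(1)] by (auto simp: m_assoc)
  next
    fix z assume "z \<in> {y \<in> topspace T. y \<otimes> inv a \<in> U}"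
    then have "z \<in> carrier G" "z \<otimes> inv a \<in> U" using lc_groupD(2)[OF assms(1)] by auto
    moreover have "z = (z \<otimes> inv a) \<otimes> a" using \<open>z \<in> carrier G\<close> assms(2) by (simp add: m_assoc)
    ultimately show "z \<in> (\<lambda>y. y \<otimes> a) ` U" by blast
  qed
  then show ?thesis
    using openin_continuous_map_preimage[OF continuous_map_right_translation[OF assms(1) inv_closed[OF assms(2)]] assms(3)] by simp
qed

lemma openin_inverse_image:
  fixes G (structure)
  assumes "lc_group G T" "openin T U"
  shows "openin T ((\<lambda>y. inv\<^bsub>G\<^esub> y) ` U)"
proof -
  interpret group G using lc_groupD[OF assms(1)] by simp
  have U: "U \<subseteq> carrier G" using openin_subset[OF assms(2)] lc_groupD(2)[OF assms(1)] by simp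
  have "(\<lambda>y. inv y) ` U = {y \<in> topspace T. inv y \<in> U}"
  proof (rule Set.set_eqI, rule iffI)
    fix z assume "z \<in> (\<lambda>y. inv y) ` U"
    then show "z \<in> {y \<in> topspace T. inv y \<in> U}"
      using U assms lc_groupD(2)[OF assms(1)] by auto
  next
    fix z assume "z \<in> {y \<in> topspace T. inv y \<in> U}"
    then have "z \<in> carrier G" "inv z \<in> U" using lc_groupD(2)[OF assms(1)] by auto
    then show "z \<in> (\<lambda>y. inv y) ` U" by (metis image_eqI inv_inv)
  qed
  then show ?thesis
    using openin_continuous_map_preimage[OF lc_groupD(6)[OF assms(1)] assms(2)] by simp
qed

lemma continuous_map_quot_top_proj:
  fixes G (structure)
  assumes "lc_group G T" "subgroup K G"
  shows "continuous_map T (quot_top G T K) (\<lambda>y. K #>\<^bsub>G\<^esub> y)"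
proof -
  interpret group G using lc_groupD[OF assms(1)] by simp
  note ts = lc_groupD(2)[OF assms(1)]
  show ?thesis unfolding continuous_map_def
  proof (intro conjI allI impI)
    show "(\<lambda>y. K #> y) \<in> topspace T \<rightarrow> topspace (quot_top G T K)"
      using topspace_quot_top[OF is_group assms(2) ts] ts rcosetsI subgroup.subset[OF assms(2)] by auto
    fix U assume "openin (quot_top G T K) U"
    then have U: "U \<subseteq> rcosets K" "openin T (\<Union>U)" using openin_quot_top[OF is_group assms(2)] by auto
    have "{x \<in> topspace T. K #> x \<in> U} = \<Union>U"
    proof (rule Set.set_eqI, rule iffI)
      fix x assume "x \<in> {x \<in> topspace T. K #> x \<in> U}"
      then show "x \<in> \<Union>U" using rcos_self[OF _ assms(2)] ts by blast
    next
      fix x assume "x \<in> \<Union>U"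
      then obtain C where C: "C \<in> U" "x \<in> C" by blast
      then have "C = K #> x" using rcos_of_mem_rcosets[OF is_group assms(2)] U by blast
      moreover have "x \<in> carrier G" using C U subgroup.rcosets_carrier[OF assms(2) is_group] by blast
      ultimately show "x \<in> {x \<in> topspace T. K #> x \<in> U}" using C ts by auto
    qed
    then show "openin T {x \<in> topspace T. K #> x \<in> U}" using U by simp
  qed
qed

lemma openin_quot_top_proj_image:
  fixes G (structure)
  assumes "lc_group G T" "subgroup K G" "openin T U"
  shows "openin (quot_top G T K) ((\<lambda>y. K #>\<^bsub>G\<^esub> y) ` U)"
proof -
  interpret group G using lc_groupD[OF assms(1)] by simp
  note ts = lc_groupD(2)[OF assms(1)]
  have Uc: "U \<subseteq> carrier G" using openin_subset[OF assms(3)] ts by simp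
  have "\<Union>((\<lambda>y. K #> y) ` U) = (\<Union>k\<in>K. (\<lambda>y. k \<otimes> y) ` U)"
    unfolding r_coset_def by blast
  moreover have "openin T (\<Union>k\<in>K. (\<lambda>y. k \<otimes> y) ` U)"
    using openin_left_translation[OF assms(1) _ assms(3)] subgroup.mem_carrier[OF assms(2)] by auto
  moreover have "(\<lambda>y. K #> y) ` U \<subseteq> rcosets K"
    using Uc rcosetsI subgroup.subset[OF assms(2)] by blast
  ultimately show ?thesis using openin_quot_top[OF is_group assms(2)] by simp
qed

lemma continuous_map_mult_inv:
  fixes G (structure)
  assumes "lc_group G T"
  shows "continuous_map (prod_topology T T) T (\<lambda>(a, b). a \<otimes> inv b)"
proof -
  have "continuous_map (prod_topology T T) (prod_topology T T) (\<lambda>(a, b). (a, inv b))"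
    using lc_groupD(6)[OF assms]
    by (auto intro!: continuous_map_pairedI continuous_map_fst
        continuous_map_compose[OF continuous_map_snd, unfolded o_def] simp: case_prod_unfold)
  from continuous_map_compose[OF this lc_groupD(5)[OF assms]]
  show ?thesis by (simp add: o_def case_prod_unfold)
qed

lemma separating_rectangle_mult_inv:
  fixes G (structure)
  assumes lcg: "lc_group G T" and cl: "closedin T H"
    and xy: "x \<in> carrier G" "y \<in> carrier G" "x \<otimes> inv y \<notin> H"
  shows "\<exists>U V. openin T U \<and> openin T V \<and> x \<in> U \<and> y \<in> V \<and> (\<forall>u\<in>U. \<forall>v\<in>V. u \<otimes> inv v \<notin> H)"
proof -
  interpret group G using lc_groupD[OF lcg] by simp
  note ts = lc_groupD(2)[OF lcg]
  let ?W = "{p \<in> topspace (prod_topology T T). (\<lambda>(a, b). a \<otimes> inv b) p \<in> carrier G - H}"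
  have "openin T (carrier G - H)" using cl ts by (simp add: closedin_def)
  then have "openin (prod_topology T T) ?W"
    using openin_continuous_map_preimage[OF continuous_map_mult_inv[OF lcg]] by blast
  moreover have "(x, y) \<in> ?W"
    using xy ts by auto
  ultimately have "\<exists>U V. openin T U \<and> openin T V \<and> x \<in> U \<and> y \<in> V \<and> U \<times> V \<subseteq> ?W"
    unfolding openin_prod_topology_alt by (meson spec)
  then obtain U V where UV: "openin T U" "openin T V" "x \<in> U" "y \<in> V" "U \<times> V \<subseteq> ?W"
    by blast
  have "u \<otimes> inv v \<notin> H" if "u \<in> U" "v \<in> V" for u v
    using subsetD[OF UV(5), of "(u, v)"] that by auto
  with UV(1-4) show ?thesis by blast
qed

lemma Hausdorff_space_quot_top:
  fixes G (structure)
  assumes lcg: "lc_group G T" and sg: "subgroup H G" and cl: "closedin T H"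
  shows "Hausdorff_space (quot_top G T H)"
  unfolding Hausdorff_space_def
proof (intro allI impI)
  interpret group G using lc_groupD[OF lcg] by simp
  note ts = lc_groupD(2)[OF lcg]
  fix C D assume "C \<in> topspace (quot_top G T H) \<and> D \<in> topspace (quot_top G T H) \<and> C \<noteq> D"
  then have CD: "C \<in> rcosets H" "D \<in> rcosets H" "C \<noteq> D"
    using topspace_quot_top[OF is_group sg ts] by auto
  obtain x y where xy: "x \<in> carrier G" "y \<in> carrier G" "C = H #> x" "D = H #> y"
    using CD unfolding RCOSETS_def by blast
  have "x \<otimes> inv y \<notin> H" using rcos_eq_iff_mult_inv[OF is_group sg xy(1,2)] xy CD by blast
  then obtain U V where UV: "openin T U" "openin T V" "x \<in> U" "y \<in> V" "\<forall>u\<in>U. \<forall>v\<in>V. u \<otimes> inv v \<notin> H"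
    using separating_rectangle_mult_inv[OF lcg cl xy(1,2)] by blast
  have "H #> u \<noteq> H #> v" if uv: "u \<in> U" "v \<in> V" for u v
  proof
    assume "H #> u = H #> v"
    moreover have "u \<in> carrier G" "v \<in> carrier G" using uv UV(1,2) openin_subset ts by blast+
    ultimately have "u \<otimes> inv v \<in> H" using rcos_eq_iff_mult_inv[OF is_group sg] by blast
    then show False using UV(5) uv by blast
  qed
  then have "disjnt ((\<lambda>y. H #> y) ` U) ((\<lambda>y. H #> y) ` V)" unfolding disjnt_def by blast
  moreover have "openin (quot_top G T H) ((\<lambda>y. H #> y) ` U)" "openin (quot_top G T H) ((\<lambda>y. H #> y) ` V)"
    using openin_quot_top_proj_image[OF lcg sg] UV by auto
  moreover have "C \<in> (\<lambda>y. H #> y) ` U" "D \<in> (\<lambda>y. H #> y) ` V" using xy UV by auto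
  ultimately show "\<exists>U V. openin (quot_top G T H) U \<and> openin (quot_top G T H) V \<and> C \<in> U \<and> D \<in> V \<and> disjnt U V"
    by blast
qed

lemma closedin_quot_top_cosets_subset:
  fixes G (structure)
  assumes lcg: "lc_group G T" and sg: "subgroup H G" and cl: "closedin T H"
    and K: "subgroup K G" "K \<subseteq> H"
  shows "closedin (quot_top G T K) {C \<in> rcosets K. C \<subseteq> H}"
  unfolding closedin_def
proof
  interpret group G using lc_groupD[OF lcg] by simp
  note ts = lc_groupD(2)[OF lcg]
  let ?Q = "quot_top G T K"
  have tsQ: "topspace ?Q = rcosets K" using topspace_quot_top[OF is_group K(1) ts] .
  show "{C \<in> rcosets K. C \<subseteq> H} \<subseteq> topspace ?Q" unfolding tsQ by blast
  have "\<Union>(topspace ?Q - {C \<in> rcosets K. C \<subseteq> H}) = carrier G - H"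
  proof (rule Set.set_eqI, rule iffI)
    fix x assume "x \<in> \<Union>(topspace ?Q - {C \<in> rcosets K. C \<subseteq> H})"
    then obtain C where C: "C \<in> rcosets K" "\<not> C \<subseteq> H" "x \<in> C" unfolding tsQ by blast
    then show "x \<in> carrier G - H"
      using rcos_subset_iff_mem[OF is_group sg K C(1,3)] subgroup.rcosets_carrier[OF K(1) is_group C(1)]
      by blast
  next
    fix x assume x: "x \<in> carrier G - H"
    have "K #> x \<in> rcosets K" "x \<in> K #> x"
      using rcosetsI[OF subgroup.subset[OF K(1)]] rcos_self[OF _ K(1)] x by auto
    then show "x \<in> \<Union>(topspace ?Q - {C \<in> rcosets K. C \<subseteq> H})"
      using x rcos_subset_iff_mem[OF is_group sg K] unfolding tsQ by blast
  qed
  moreover have "openin T (carrier G - H)" using cl ts by (simp add: closedin_def)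
  ultimately show "openin ?Q (topspace ?Q - {C \<in> rcosets K. C \<subseteq> H})"
    using openin_quot_top[OF is_group K(1)] tsQ by simp
qed
section \<open>Length functions\<close>

lemma length_fnD:
  fixes G (structure)
  assumes "length_fn G T H l"
  shows "l \<in> borel_measurable (borel_of T)" "\<And>x. x \<in> carrier G \<Longrightarrow> 0 \<le> l x" "l \<one> = 0"
    "\<And>x. x \<in> carrier G \<Longrightarrow> l (inv x) = l x"
    "\<And>x y. x \<in> carrier G \<Longrightarrow> y \<in> carrier G \<Longrightarrow> l (x \<otimes> y) \<le> l x + l y"
    "\<And>h. h \<in> H \<Longrightarrow> l h = 0"
  using assms unfolding length_fn_def by auto

lemma length_fn_H_invariant:
  fixes G (structure)
  assumes "length_fn G T H l" "group G" "subgroup H G" "h \<in> H" "x \<in> carrier G"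
  shows "l (h \<otimes> x) = l x" "l (x \<otimes> h) = l x"
proof -
  interpret group G by fact
  note b = length_fnD[OF assms(1)]
  have hc: "h \<in> carrier G" "inv h \<in> carrier G" "inv h \<in> H"
    using subgroup.mem_carrier[OF assms(3,4)] subgroup.m_inv_closed[OF assms(3,4)] by auto
  have "l (h \<otimes> x) \<le> l x" using b(5)[of h x] b(6)[OF assms(4)] hc assms by simp
  moreover have "l x \<le> l (h \<otimes> x)"
  proof -
    have "x = inv h \<otimes> (h \<otimes> x)" using hc assms by (simp add: m_assoc[symmetric])
    then have "l x \<le> l (inv h) + l (h \<otimes> x)" using b(5)[of "inv h" "h \<otimes> x"] hc assms by simp
    then show ?thesis using b(6)[OF hc(3)] by simp
  qed
  ultimately show "l (h \<otimes> x) = l x" by simp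
  have "l (x \<otimes> h) \<le> l x" using b(5)[of x h] b(6)[OF assms(4)] hc assms by simp
  moreover have "l x \<le> l (x \<otimes> h)"
  proof -
    have "x = (x \<otimes> h) \<otimes> inv h" using hc assms by (simp add: m_assoc)
    then have "l x \<le> l (x \<otimes> h) + l (inv h)" using b(5)[of "x \<otimes> h" "inv h"] hc assms by simp
    then show ?thesis using b(6)[OF hc(3)] by simp
  qed
  ultimately show "l (x \<otimes> h) = l x" by simp
qed

lemma length_fn_coset_rep:
  fixes G (structure)
  assumes "length_fn G T H l" "group G" "subgroup H G" "C \<in> rcosets H" "y \<in> C"
  shows "l y = l (coset_rep G H C)"
proof -
  interpret group G by fact
  have "C = H #> y" using rcos_of_mem_rcosets[OF assms(2,3,4,5)] .
  moreover have yc: "y \<in> carrier G" using assms subgroup.rcosets_carrier by blast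
  ultimately obtain h where "h \<in> H" "coset_rep G H C = h \<otimes> y" using coset_rep_r_coset[OF assms(2,3)] by metis
  then show ?thesis using length_fn_H_invariant[OF assms(1,2,3) _ yc] by simp
qed

section \<open>The upper semicontinuous envelope of a length function\<close>

text \<open>Where \<open>l\<close> is unbounded near \<open>x\<close> the set is empty and the value is junk; the locale
  \<open>bounded_length\<close> below excludes this.\<close>
definition usc_env :: "'a topology \<Rightarrow> ('a \<Rightarrow> real) \<Rightarrow> 'a \<Rightarrow> real" where
  "usc_env T l x = Inf {b. \<exists>U. openin T U \<and> x \<in> U \<and> (\<forall>y\<in>U. l y \<le> b)}"

text \<open>The envelope of \<open>l\<close> need not vanish on \<open>H\<close>; \<open>reg_len\<close> restores this.\<close>
definition reg_len :: "'a topology \<Rightarrow> 'a set \<Rightarrow> ('a \<Rightarrow> real) \<Rightarrow> 'a \<Rightarrow> real" where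
  "reg_len T H l x = (if x \<in> H then 0 else usc_env T l x)"

locale bounded_length =
  fixes G (structure) and T H l
  assumes lcg: "lc_group G T" and sg: "subgroup H G" and cl: "closedin T H"
    and len: "length_fn G T H l" and lb: "locally_bounded_len G T H l"
begin

lemma grp: "group G" using lc_groupD[OF lcg] by simp
lemma ts: "topspace T = carrier G" using lc_groupD[OF lcg] by simp

lemma bounded_near:
  assumes "x \<in> carrier G"
  shows "\<exists>U b. openin T U \<and> x \<in> U \<and> (\<forall>y\<in>U. l y \<le> b)"
proof -
  interpret group G by (rule grp)
  obtain U L where UL: "openin T U" "compactin T L" "x \<in> U" "U \<subseteq> L"
    using lc_groupD(4)[OF lcg] assms ts unfolding locally_compact_space_def by metis
  have "compactin (quot_top G T H) ((\<lambda>y. H #> y) ` L)"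
    using image_compactin[OF UL(2) continuous_map_quot_top_proj[OF lcg sg]] .
  then obtain B where B: "\<forall>C\<in>(\<lambda>y. H #> y) ` L. l (coset_rep G H C) \<le> B"
    using lb unfolding locally_bounded_len_def by blast
  have "\<forall>y\<in>U. l y \<le> B"
  proof
    fix y assume "y \<in> U"
    then have y: "y \<in> L" "y \<in> carrier G" using UL ts compactin_subset_topspace by blast+
    have C: "H #> y \<in> rcosets H" by (rule rcosetsI[OF subgroup.subset[OF sg] y(2)])
    have "l y = l (coset_rep G H (H #> y))"
      by (rule length_fn_coset_rep[OF len grp sg C rcos_self[OF y(2) sg]])
    then show "l y \<le> B" using B y by auto
  qed
  then show ?thesis using UL by blast
qed

lemma usc_env_set_ne: "x \<in> carrier G \<Longrightarrow> {b. \<exists>U. openin T U \<and> x \<in> U \<and> (\<forall>y\<in>U. l y \<le> b)} \<noteq> {}"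
  using bounded_near by blast

lemma usc_env_set_bdd: "bdd_below {b. \<exists>U. openin T U \<and> x \<in> U \<and> (\<forall>y\<in>U. l y \<le> b)}"
  unfolding bdd_below_def by (rule exI[of _ "l x"]) auto

lemma usc_env_ge: "x \<in> carrier G \<Longrightarrow> l x \<le> usc_env T l x"
  unfolding usc_env_def by (rule cInf_greatest[OF usc_env_set_ne]) auto

lemma usc_env_nonneg: "x \<in> carrier G \<Longrightarrow> 0 \<le> usc_env T l x"
  using usc_env_ge length_fnD(2)[OF len] by (meson order_trans)

lemma usc_env_le: "openin T U \<Longrightarrow> x \<in> U \<Longrightarrow> (\<forall>y\<in>U. l y \<le> b) \<Longrightarrow> usc_env T l x \<le> b"
  unfolding usc_env_def by (rule cInf_lower[OF _ usc_env_set_bdd]) auto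

lemma usc_env_lt:
  assumes "x \<in> carrier G" "usc_env T l x < t"
  shows "\<exists>U b. openin T U \<and> x \<in> U \<and> (\<forall>y\<in>U. l y \<le> b) \<and> b < t"
proof -
  from assms(2) obtain b where "b \<in> {b. \<exists>U. openin T U \<and> x \<in> U \<and> (\<forall>y\<in>U. l y \<le> b)}" "b < t"
    unfolding usc_env_def using cInf_lessD[OF usc_env_set_ne[OF assms(1)]] by blast
  then show ?thesis by blast
qed

lemma openin_usc_env_less: "openin T {x \<in> carrier G. usc_env T l x < t}"
proof (subst openin_subopen, intro ballI)
  fix x assume x: "x \<in> {x \<in> carrier G. usc_env T l x < t}"
  then obtain U b where U: "openin T U" "x \<in> U" "\<forall>y\<in>U. l y \<le> b" "b < t" using usc_env_lt by blast
  have "U \<subseteq> {x \<in> carrier G. usc_env T l x < t}"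
  proof
    fix z assume "z \<in> U"
    then have "usc_env T l z \<le> b" "z \<in> carrier G" using usc_env_le[OF U(1) _ U(3)] openin_subset[OF U(1)] ts by auto
    then show "z \<in> {x \<in> carrier G. usc_env T l x < t}" using U(4) by auto
  qed
  then show "\<exists>T'. openin T T' \<and> x \<in> T' \<and> T' \<subseteq> {x \<in> carrier G. usc_env T l x < t}" using U by blast
qed

lemma usc_env_subadd:
  assumes x: "x \<in> carrier G" and y: "y \<in> carrier G"
  shows "usc_env T l (x \<otimes> y) \<le> usc_env T l x + usc_env T l y"
proof -
  interpret group G by (rule grp)
  have key: "usc_env T l (x \<otimes> y) \<le> b1 + b2"
    if "openin T U" "x \<in> U" "\<forall>z\<in>U. l z \<le> b1" "openin T V" "y \<in> V" "\<forall>z\<in>V. l z \<le> b2" for U V b1 b2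
  proof (rule usc_env_le)
    have Uc: "U \<subseteq> carrier G" "V \<subseteq> carrier G" using that openin_subset ts by blast+
    show "openin T (\<Union>u\<in>U. (\<lambda>v. u \<otimes> v) ` V)"
      using openin_left_translation[OF lcg _ that(4)] Uc by (auto intro!: openin_Union)
    show "x \<otimes> y \<in> (\<Union>u\<in>U. (\<lambda>v. u \<otimes> v) ` V)" using that by blast
    show "\<forall>z\<in>(\<Union>u\<in>U. (\<lambda>v. u \<otimes> v) ` V). l z \<le> b1 + b2"
    proof
      fix z assume "z \<in> (\<Union>u\<in>U. (\<lambda>v. u \<otimes> v) ` V)"
      then obtain u v where uv: "u \<in> U" "v \<in> V" "z = u \<otimes> v" by blast
      then have "l z \<le> l u + l v" using length_fnD(5)[OF len] Uc by blast
      then show "l z \<le> b1 + b2" using that uv by fastforce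
    qed
  qed
  define S where "S z = {b. \<exists>U. openin T U \<and> z \<in> U \<and> (\<forall>y\<in>U. l y \<le> b)}" for z
  have "\<forall>b2\<in>S y. usc_env T l (x \<otimes> y) - b2 \<le> usc_env T l x"
  proof
    fix b2 assume "b2 \<in> S y"
    then obtain V where V: "openin T V" "y \<in> V" "\<forall>z\<in>V. l z \<le> b2" unfolding S_def by blast
    have "usc_env T l (x \<otimes> y) - b2 \<le> b1" if "b1 \<in> S x" for b1
      using that key[OF _ _ _ V] unfolding S_def by fastforce
    then show "usc_env T l (x \<otimes> y) - b2 \<le> usc_env T l x"
      unfolding usc_env_def S_def[symmetric] using usc_env_set_ne[OF x] unfolding S_def
      by (intro cInf_greatest) auto
  qed
  then have "\<forall>b2\<in>S y. usc_env T l (x \<otimes> y) - usc_env T l x \<le> b2" by auto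
  then have "usc_env T l (x \<otimes> y) - usc_env T l x \<le> usc_env T l y"
    unfolding usc_env_def[of T l y] S_def[symmetric] using usc_env_set_ne[OF y] unfolding S_def
    by (intro cInf_greatest) auto
  then show ?thesis by simp
qed


lemma usc_env_set_map:
  assumes f_open: "\<And>U. openin T U \<Longrightarrow> openin T (f ` U)"
    and f_l: "\<And>z. z \<in> carrier G \<Longrightarrow> l (f z) \<le> l z"
  shows "{b. \<exists>U. openin T U \<and> x \<in> U \<and> (\<forall>y\<in>U. l y \<le> b)} \<subseteq> {b. \<exists>U. openin T U \<and> f x \<in> U \<and> (\<forall>y\<in>U. l y \<le> b)}"
proof
  fix b assume "b \<in> {b. \<exists>U. openin T U \<and> x \<in> U \<and> (\<forall>y\<in>U. l y \<le> b)}"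
  then obtain U where U: "openin T U" "x \<in> U" "\<forall>y\<in>U. l y \<le> b" by blast
  have "\<forall>y\<in>f ` U. l y \<le> b"
  proof
    fix y assume "y \<in> f ` U"
    then obtain z where "z \<in> U" "y = f z" by blast
    moreover have "z \<in> carrier G" using \<open>z \<in> U\<close> openin_subset[OF U(1)] ts by blast
    ultimately show "l y \<le> b" using f_l U(3) by fastforce
  qed
  then show "b \<in> {b. \<exists>U. openin T U \<and> f x \<in> U \<and> (\<forall>y\<in>U. l y \<le> b)}"
    using U f_open by blast
qed

lemma usc_env_map_le:
  assumes "x \<in> carrier G" "f x \<in> carrier G" "\<And>U. openin T U \<Longrightarrow> openin T (f ` U)"
    "\<And>z. z \<in> carrier G \<Longrightarrow> l (f z) \<le> l z"
  shows "usc_env T l (f x) \<le> usc_env T l x"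
  unfolding usc_env_def
  by (rule cInf_superset_mono[OF usc_env_set_ne[OF assms(1)] usc_env_set_bdd usc_env_set_map[OF assms(3,4)]])

lemma usc_env_inv: "x \<in> carrier G \<Longrightarrow> usc_env T l (inv x) = usc_env T l x"
proof -
  interpret group G by (rule grp)
  assume x: "x \<in> carrier G"
  have a: "usc_env T l (inv z) \<le> usc_env T l z" if "z \<in> carrier G" for z
    using usc_env_map_le[of z "\<lambda>y. inv y"] that openin_inverse_image[OF lcg] length_fnD(4)[OF len] by auto
  show ?thesis using a[OF x] a[of "inv x"] x by simp
qed

lemma usc_env_H_invariant:
  assumes h: "h \<in> H" and x: "x \<in> carrier G"
  shows "usc_env T l (h \<otimes> x) = usc_env T l x" "usc_env T l (x \<otimes> h) = usc_env T l x"
proof -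
  interpret group G by (rule grp)
  have hc: "h \<in> carrier G" "inv h \<in> H" "inv h \<in> carrier G"
    using subgroup.mem_carrier[OF sg h] subgroup.m_inv_closed[OF sg h] by auto
  have a: "usc_env T l (g \<otimes> z) \<le> usc_env T l z" if "z \<in> carrier G" "g \<in> H" for z g
    using usc_env_map_le[of z "\<lambda>y. g \<otimes> y"] that openin_left_translation[OF lcg] length_fn_H_invariant(1)[OF len grp sg]
      subgroup.mem_carrier[OF sg] by auto
  have "usc_env T l (inv h \<otimes> (h \<otimes> x)) \<le> usc_env T l (h \<otimes> x)" using a[of "h \<otimes> x" "inv h"] hc x by simp
  then show "usc_env T l (h \<otimes> x) = usc_env T l x" using a[OF x h] hc x by (simp add: m_assoc[symmetric])
  have b: "usc_env T l (z \<otimes> g) \<le> usc_env T l z" if "z \<in> carrier G" "g \<in> H" for z g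
    using usc_env_map_le[of z "\<lambda>y. y \<otimes> g"] that openin_right_translation[OF lcg] length_fn_H_invariant(2)[OF len grp sg]
      subgroup.mem_carrier[OF sg] by auto
  have "usc_env T l ((x \<otimes> h) \<otimes> inv h) \<le> usc_env T l (x \<otimes> h)" using b[of "x \<otimes> h" "inv h"] hc x by simp
  then show "usc_env T l (x \<otimes> h) = usc_env T l x" using b[OF x h] hc x by (simp add: m_assoc)
qed

lemma usc_env_compact_bound:
  assumes K: "compactin (quot_top G T H) K"
  shows "\<exists>B. \<forall>C\<in>K. usc_env T l (coset_rep G H C) \<le> B"
proof (rule compactin_bounded_above[OF K])
  fix C assume "C \<in> K"
  then have C: "C \<in> rcosets H"
    using compactin_subset_topspace[OF K] topspace_quot_top[OF grp sg ts] by blast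
  interpret group G by (rule grp)
  let ?x = "coset_rep G H C"
  have x: "?x \<in> carrier G" "C = H #> ?x" using coset_rep[OF grp sg C] by auto
  obtain U b where U: "openin T U" "?x \<in> U" "\<forall>y\<in>U. l y \<le> b" using bounded_near[OF x(1)] by blast
  have "usc_env T l (coset_rep G H C') \<le> b" if C': "C' \<in> (\<lambda>y. H #> y) ` U" for C'
  proof -
    obtain u where u: "u \<in> U" "C' = H #> u" using C' by blast
    have "u \<in> carrier G" using openin_subset[OF U(1)] u ts by auto
    then obtain h where h: "h \<in> H" "coset_rep G H (H #> u) = h \<otimes> u"
      using coset_rep_r_coset[OF grp sg] by blast
    then have "usc_env T l (coset_rep G H C') = usc_env T l u"
      using u usc_env_H_invariant(1)[OF h(1) \<open>u \<in> carrier G\<close>] by simp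
    also have "\<dots> \<le> b" using usc_env_le[OF U(1) u(1) U(3)] .
    finally show ?thesis .
  qed
  then show "\<exists>V b. openin (quot_top G T H) V \<and> C \<in> V \<and> (\<forall>C'\<in>V. usc_env T l (coset_rep G H C') \<le> b)"
    using openin_quot_top_proj_image[OF lcg sg U(1)] x U(2) by blast
qed

lemma reg_len_nonneg: "x \<in> carrier G \<Longrightarrow> 0 \<le> reg_len T H l x"
  unfolding reg_len_def using usc_env_nonneg by auto

lemma reg_len_le_usc_env: "x \<in> carrier G \<Longrightarrow> reg_len T H l x \<le> usc_env T l x"
  unfolding reg_len_def using usc_env_nonneg by auto

lemma reg_len_ge: "x \<in> carrier G \<Longrightarrow> l x \<le> reg_len T H l x"
  unfolding reg_len_def using usc_env_ge length_fnD(6)[OF len] by auto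

lemma reg_len_H: "h \<in> H \<Longrightarrow> reg_len T H l h = 0"
  unfolding reg_len_def by simp

lemma reg_len_H_invariant:
  assumes h: "h \<in> H" and x: "x \<in> carrier G"
  shows "reg_len T H l (h \<otimes> x) = reg_len T H l x" "reg_len T H l (x \<otimes> h) = reg_len T H l x"
proof -
  interpret group G by (rule grp)
  have hc: "h \<in> carrier G" "inv h \<in> H" using subgroup.mem_carrier[OF sg h] subgroup.m_inv_closed[OF sg h] by auto
  have "h \<otimes> x \<in> H \<longleftrightarrow> x \<in> H"
  proof
    assume "h \<otimes> x \<in> H"
    then have "inv h \<otimes> (h \<otimes> x) \<in> H" using hc subgroup.m_closed[OF sg] by blast
    then show "x \<in> H" using hc x by (simp add: m_assoc[symmetric])
  qed (use h subgroup.m_closed[OF sg] in blast)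
  then show "reg_len T H l (h \<otimes> x) = reg_len T H l x" unfolding reg_len_def using usc_env_H_invariant(1)[OF h x] by simp
  have "x \<otimes> h \<in> H \<longleftrightarrow> x \<in> H"
  proof
    assume "x \<otimes> h \<in> H"
    then have "(x \<otimes> h) \<otimes> inv h \<in> H" using hc subgroup.m_closed[OF sg] by blast
    then show "x \<in> H" using hc x by (simp add: m_assoc)
  qed (use h subgroup.m_closed[OF sg] in blast)
  then show "reg_len T H l (x \<otimes> h) = reg_len T H l x" unfolding reg_len_def using usc_env_H_invariant(2)[OF h x] by simp
qed

lemma reg_len_inv: "x \<in> carrier G \<Longrightarrow> reg_len T H l (inv x) = reg_len T H l x"
proof -
  interpret group G by (rule grp)
  assume x: "x \<in> carrier G"
  have "inv x \<in> H \<longleftrightarrow> x \<in> H" using x subgroup.m_inv_closed[OF sg] by (metis inv_inv)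
  then show ?thesis unfolding reg_len_def using usc_env_inv[OF x] by simp
qed

lemma reg_len_subadd:
  assumes x: "x \<in> carrier G" and y: "y \<in> carrier G"
  shows "reg_len T H l (x \<otimes> y) \<le> reg_len T H l x + reg_len T H l y"
proof -
  interpret group G by (rule grp)
  show ?thesis
  proof (cases "x \<otimes> y \<in> H")
    case True then show ?thesis using reg_len_nonneg x y reg_len_H by (simp add: add_nonneg_nonneg)
  next
    case xy: False
    show ?thesis
    proof (cases "x \<in> H")
      case True
      then show ?thesis using reg_len_H_invariant(1)[OF True y] reg_len_H[OF True] by simp
    next
      case xH: False
      show ?thesis
      proof (cases "y \<in> H")
        case True
        then show ?thesis using reg_len_H_invariant(2)[OF True x] reg_len_H[OF True] by simp
      next
        case False
        then show ?thesis using xH xy usc_env_subadd[OF x y] unfolding reg_len_def by simp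
      qed
    qed
  qed
qed

lemma reg_len_compact_bound:
  assumes K: "compactin (quot_top G T H) K"
  shows "\<exists>B. \<forall>C\<in>K. reg_len T H l (coset_rep G H C) \<le> B"
proof -
  obtain B where B: "\<forall>C\<in>K. usc_env T l (coset_rep G H C) \<le> B" using usc_env_compact_bound[OF K] by blast
  have "\<forall>C\<in>K. reg_len T H l (coset_rep G H C) \<le> B"
  proof
    fix C assume "C \<in> K"
    then have "C \<in> rcosets H" using compactin_subset_topspace[OF K] topspace_quot_top[OF grp sg ts] by blast
    then have "coset_rep G H C \<in> carrier G" using coset_rep[OF grp sg] by blast
    then show "reg_len T H l (coset_rep G H C) \<le> B" using reg_len_le_usc_env B \<open>C \<in> K\<close> by (meson order_trans)
  qed
  then show ?thesis by blast
qed

lemma usc_env_coset_rep: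
  assumes K: "subgroup K G" "K \<subseteq> H" and C: "C \<in> rcosets K" "x \<in> C"
  shows "usc_env T l (coset_rep G K C) = usc_env T l x"
proof -
  have x: "x \<in> carrier G" using C subgroup.rcosets_carrier[OF K(1) grp] by blast
  have "C = K #> x" using rcos_of_mem_rcosets[OF grp K(1) C] .
  then obtain k where "k \<in> K" "coset_rep G K C = k \<otimes> x" using coset_rep_r_coset[OF grp K(1) x] by metis
  then show ?thesis using usc_env_H_invariant(1)[of k x] K x by auto
qed

lemma reg_len_coset_rep:
  assumes K: "subgroup K G" "K \<subseteq> H" and C: "C \<in> rcosets K" "x \<in> C"
  shows "reg_len T H l (coset_rep G K C) = reg_len T H l x"
proof -
  have x: "x \<in> carrier G" using C subgroup.rcosets_carrier[OF K(1) grp] by blast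
  have "C = K #> x" using rcos_of_mem_rcosets[OF grp K(1) C] .
  then obtain k where "k \<in> K" "coset_rep G K C = k \<otimes> x" using coset_rep_r_coset[OF grp K(1) x] by metis
  then show ?thesis using reg_len_H_invariant(1)[of k x] K x by auto
qed

lemma openin_quot_top_usc_env_less:
  assumes K: "subgroup K G" "K \<subseteq> H"
  shows "openin (quot_top G T K) {C \<in> rcosets K. usc_env T l (coset_rep G K C) < t}"
proof -
  interpret group G by (rule grp)
  let ?B = "{C \<in> rcosets K. usc_env T l (coset_rep G K C) < t}"
  have "\<Union>?B = {x \<in> carrier G. usc_env T l x < t}"
  proof (rule Set.set_eqI, rule iffI)
    fix x assume "x \<in> \<Union>?B"
    then obtain C where C: "C \<in> rcosets K" "x \<in> C" "usc_env T l (coset_rep G K C) < t" by blast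
    then show "x \<in> {x \<in> carrier G. usc_env T l x < t}"
      using usc_env_coset_rep[OF K C(1,2)] subgroup.rcosets_carrier[OF K(1) grp C(1)] by auto
  next
    fix x assume x: "x \<in> {x \<in> carrier G. usc_env T l x < t}"
    have C: "K #> x \<in> rcosets K" using rcosetsI[OF subgroup.subset[OF K(1)]] x by blast
    have xx: "x \<in> K #> x" using rcos_self[OF _ K(1)] x by blast
    have "K #> x \<in> ?B" using C x usc_env_coset_rep[OF K C xx] by simp
    then show "x \<in> \<Union>?B" using xx by blast
  qed
  then show ?thesis using openin_quot_top[OF grp K(1)] openin_usc_env_less by auto
qed

lemma reg_len_measurable:
  assumes K: "subgroup K G" "K \<subseteq> H"
  shows "(\<lambda>C. reg_len T H l (coset_rep G K C)) \<in> borel_measurable (borel_of (quot_top G T K))"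
proof (rule borel_measurableI_less)
  fix t :: real
  let ?Q = "quot_top G T K"
  let ?S = "{C \<in> space (borel_of ?Q). reg_len T H l (coset_rep G K C) < t}"
  have tsQ: "space (borel_of ?Q) = rcosets K" using topspace_quot_top[OF grp K(1) ts] by simp
  show "?S \<in> sets (borel_of ?Q)"
  proof (cases "t \<le> 0")
    case True
    have "\<not> reg_len T H l (coset_rep G K C) < t" if "C \<in> rcosets K" for C
      using True reg_len_nonneg[OF coset_rep(1)[OF grp K(1) that]] by linarith
    then have "?S = {}" unfolding tsQ by blast
    then show ?thesis by (metis sets.empty_sets)
  next
    case False
    have "?S = {C \<in> rcosets K. C \<subseteq> H} \<union> {C \<in> rcosets K. usc_env T l (coset_rep G K C) < t}"
    proof (rule Set.set_eqI)
      fix C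
      show "C \<in> ?S \<longleftrightarrow> C \<in> {C \<in> rcosets K. C \<subseteq> H} \<union> {C \<in> rcosets K. usc_env T l (coset_rep G K C) < t}"
      proof (cases "C \<in> rcosets K")
        case True
        have "C \<subseteq> H \<longleftrightarrow> coset_rep G K C \<in> H"
          by (rule rcos_subset_iff_mem[OF grp sg K True coset_rep(3)[OF grp K(1) True]])
        then show ?thesis using False True unfolding tsQ reg_len_def by auto
      qed (use tsQ in auto)
    qed
    then show ?thesis
      using closedin_borel_of[OF closedin_quot_top_cosets_subset[OF lcg sg cl K]]
        openin_borel_of[OF openin_quot_top_usc_env_less[OF K]] by auto
  qed
qed

end

section \<open>Transport along measurable bijections\<close>

locale measurable_bij =
  fixes M :: "'x measure" and N :: "'y measure" and \<phi> :: "'x \<Rightarrow> 'y" and \<psi> :: "'y \<Rightarrow> 'x"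
  assumes phi_meas: "\<phi> \<in> M \<rightarrow>\<^sub>M N" and psi_meas: "\<psi> \<in> N \<rightarrow>\<^sub>M M"
    and psi_phi: "\<And>x. x \<in> space M \<Longrightarrow> \<psi> (\<phi> x) = x"
    and phi_psi: "\<And>y. y \<in> space N \<Longrightarrow> \<phi> (\<psi> y) = y"
begin

lemma borel_measurable_distr_iff:
  "f \<in> borel_measurable (distr M N \<phi>) \<longleftrightarrow> (\<lambda>x. f (\<phi> x)) \<in> borel_measurable M"
proof
  assume "f \<in> borel_measurable (distr M N \<phi>)"
  then show "(\<lambda>x. f (\<phi> x)) \<in> borel_measurable M"
    using measurable_compose[OF phi_meas] by simp
next
  assume "(\<lambda>x. f (\<phi> x)) \<in> borel_measurable M"
  then have "(\<lambda>y. f (\<phi> (\<psi> y))) \<in> borel_measurable N" using measurable_compose[OF psi_meas] by blast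
  then have "f \<in> borel_measurable N" using measurable_cong[of N "\<lambda>y. f (\<phi> (\<psi> y))" f] phi_psi by simp
  then show "f \<in> borel_measurable (distr M N \<phi>)" by simp
qed

lemma integrable_distr_iff:
  fixes f :: "'y \<Rightarrow> 'c::{banach, second_countable_topology}"
  shows "integrable (distr M N \<phi>) f \<longleftrightarrow> integrable M (\<lambda>x. f (\<phi> x))"
proof (cases "f \<in> borel_measurable N")
  case True
  then show ?thesis by (rule integrable_distr_eq[OF phi_meas])
next
  case False
  then have "f \<notin> borel_measurable (distr M N \<phi>)" by simp
  then have "\<not> integrable (distr M N \<phi>) f" "\<not> integrable M (\<lambda>x. f (\<phi> x))"
    using borel_measurable_distr_iff borel_measurable_integrable by metis+
  then show ?thesis by simp
qed

lemma integral_distr_eq: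
  fixes f :: "'y \<Rightarrow> 'c::{banach, second_countable_topology}"
  shows "integral\<^sup>L (distr M N \<phi>) f = integral\<^sup>L M (\<lambda>x. f (\<phi> x))"
proof (cases "f \<in> borel_measurable N")
  case True
  then show ?thesis by (rule integral_distr[OF phi_meas])
next
  case False
  then have "f \<notin> borel_measurable (distr M N \<phi>)" by simp
  then have "\<not> integrable (distr M N \<phi>) f" "\<not> integrable M (\<lambda>x. f (\<phi> x))"
    using borel_measurable_distr_iff borel_measurable_integrable by metis+
  then show ?thesis using not_integrable_integral_eq by metis
qed

lemma vimage_eq_image:
  assumes "B \<subseteq> space N"
  shows "\<phi> -` B \<inter> space M = \<psi> ` B"
proof (rule Set.set_eqI, rule iffI)
  fix x assume "x \<in> \<phi> -` B \<inter> space M"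
  then show "x \<in> \<psi> ` B" using psi_phi by (metis IntD1 IntD2 image_eqI vimageE)
next
  fix x assume "x \<in> \<psi> ` B"
  then obtain y where "y \<in> B" "x = \<psi> y" by blast
  then show "x \<in> \<phi> -` B \<inter> space M"
    using assms phi_psi measurable_space[OF psi_meas] by auto
qed

lemma sets_image: "B \<in> sets N \<Longrightarrow> \<psi> ` B \<in> sets M"
  using vimage_eq_image[of B] measurable_sets[OF phi_meas] sets.sets_into_space by metis

lemma emeasure_distr_eq_image:
  assumes B: "B \<subseteq> space N"
  shows "emeasure (distr M N \<phi>) B = emeasure M (\<psi> ` B)"
proof (cases "B \<in> sets N")
  case True
  then show ?thesis using emeasure_distr[OF phi_meas True] vimage_eq_image[OF B] by simp
next
  case False
  have "\<psi> ` B \<notin> sets M"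
  proof
    assume "\<psi> ` B \<in> sets M"
    then have "\<psi> -` (\<psi> ` B) \<inter> space N \<in> sets N" using psi_meas measurable_sets by blast
    moreover have "\<psi> -` (\<psi> ` B) \<inter> space N = B"
    proof (rule Set.set_eqI, rule iffI)
      fix y assume "y \<in> \<psi> -` (\<psi> ` B) \<inter> space N"
      then obtain z where "z \<in> B" "\<psi> y = \<psi> z" "y \<in> space N" by blast
      then show "y \<in> B" using phi_psi B by (metis subsetD)
    qed (use B in blast)
    ultimately show False using False by simp
  qed
  then show ?thesis using False emeasure_notin_sets by (metis sets_distr)
qed

lemma L2set_distr_iff: "\<xi> \<in> L2set (distr M N \<phi>) \<longleftrightarrow> (\<lambda>x. \<xi> (\<phi> x)) \<in> L2set M"
  unfolding L2set_def
  using borel_measurable_distr_iff[of \<xi>] integrable_distr_iff[of "\<lambda>D. (cmod (\<xi> D))\<^sup>2"] by simp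

lemma l2norm_distr: "l2norm (distr M N \<phi>) \<xi> = l2norm M (\<lambda>x. \<xi> (\<phi> x))"
  unfolding l2norm_def using integral_distr_eq[of "\<lambda>D. (cmod (\<xi> D))\<^sup>2"] by simp

end
section \<open>Transport along homeomorphisms of coset spaces\<close>

lemma homeomorphic_maps_openin_superset:
  assumes hom: "homeomorphic_maps X Y f g" and A: "A \<subseteq> topspace Y"
  shows "{U. openin X U \<and> g ` A \<subseteq> U} = (\<lambda>V. g ` V) ` {V. openin Y V \<and> A \<subseteq> V}"
proof (rule Set.set_eqI, rule iffI)
  have hf: "homeomorphic_map X Y f" and gf: "\<forall>x\<in>topspace X. g (f x) = x"
    and fg: "\<forall>y\<in>topspace Y. f (g y) = y"
    using hom unfolding homeomorphic_maps_map by auto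
  fix U assume "U \<in> {U. openin X U \<and> g ` A \<subseteq> U}"
  then have U: "openin X U" "g ` A \<subseteq> U" by auto
  have Uc: "U \<subseteq> topspace X" using openin_subset[OF U(1)] .
  have "openin Y (f ` U)" using homeomorphic_map_openness[OF hf Uc] U(1) by simp
  moreover have "A \<subseteq> f ` U"
  proof
    fix a assume "a \<in> A"
    then show "a \<in> f ` U" using U(2) fg A by (metis image_eqI image_subset_iff subsetD)
  qed
  moreover have "g ` f ` U = U" using Uc gf by (force simp: image_image)
  ultimately show "U \<in> (\<lambda>V. g ` V) ` {V. openin Y V \<and> A \<subseteq> V}" by blast
next
  have hg: "homeomorphic_map Y X g"
    using hom unfolding homeomorphic_maps_map by auto
  fix U assume "U \<in> (\<lambda>V. g ` V) ` {V. openin Y V \<and> A \<subseteq> V}"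
  then obtain V where "openin Y V" "A \<subseteq> V" "U = g ` V" by blast
  then show "U \<in> {U. openin X U \<and> g ` A \<subseteq> U}"
    using homeomorphic_map_openness[OF hg openin_subset] by blast
qed

lemma homeomorphic_maps_compactin_subset:
  assumes hom: "homeomorphic_maps X Y f g" and U: "U \<subseteq> topspace Y"
  shows "{K. compactin X K \<and> K \<subseteq> g ` U} = (\<lambda>K. g ` K) ` {K. compactin Y K \<and> K \<subseteq> U}"
proof (rule Set.set_eqI, rule iffI)
  have f: "continuous_map X Y f" and gf: "\<forall>x\<in>topspace X. g (f x) = x"
    and fg: "\<forall>y\<in>topspace Y. f (g y) = y"
    using hom unfolding homeomorphic_maps_def by auto
  fix K assume "K \<in> {K. compactin X K \<and> K \<subseteq> g ` U}"
  then have K: "compactin X K" "K \<subseteq> g ` U" by auto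
  have Kc: "K \<subseteq> topspace X" using compactin_subset_topspace[OF K(1)] .
  have "compactin Y (f ` K)" using image_compactin[OF K(1) f] .
  moreover have "f ` K \<subseteq> U"
  proof
    fix z assume "z \<in> f ` K"
    then obtain u where "u \<in> U" "z = f (g u)" using K(2) by blast
    then show "z \<in> U" using U fg by auto
  qed
  moreover have "g ` f ` K = K" using Kc gf by (force simp: image_image)
  ultimately show "K \<in> (\<lambda>K. g ` K) ` {K. compactin Y K \<and> K \<subseteq> U}" by blast
next
  have g: "continuous_map Y X g" using hom unfolding homeomorphic_maps_def by auto
  fix K assume "K \<in> (\<lambda>K. g ` K) ` {K. compactin Y K \<and> K \<subseteq> U}"
  then obtain K' where "compactin Y K'" "K' \<subseteq> U" "K = g ` K'" by blast
  then show "K \<in> {K. compactin X K \<and> K \<subseteq> g ` U}" using image_compactin[OF _ g] by blast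
qed

lemma measurable_bij_borel_of:
  assumes hom: "homeomorphic_maps X Y f g" and sets: "sets \<mu> = sets (borel_of X)"
  shows "measurable_bij \<mu> (borel_of Y) f g"
proof
  have "f \<in> borel_of X \<rightarrow>\<^sub>M borel_of Y" "g \<in> borel_of Y \<rightarrow>\<^sub>M borel_of X"
    using continuous_map_measurable hom unfolding homeomorphic_maps_def by blast+
  then show "f \<in> \<mu> \<rightarrow>\<^sub>M borel_of Y" "g \<in> borel_of Y \<rightarrow>\<^sub>M \<mu>"
    using measurable_cong_sets[OF sets refl] measurable_cong_sets[OF refl sets] by blast+
  show "\<And>x. x \<in> space \<mu> \<Longrightarrow> g (f x) = x" "\<And>y. y \<in> space (borel_of Y) \<Longrightarrow> f (g y) = y"
    using hom sets_eq_imp_space_eq[OF sets] unfolding homeomorphic_maps_def by auto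
qed

lemma radon_measure_distr:
  assumes hom: "homeomorphic_maps X Y f g" and r: "radon_measure X \<mu>"
  shows "radon_measure Y (distr \<mu> (borel_of Y) f)"
proof -
  have sets: "sets \<mu> = sets (borel_of X)" using r unfolding radon_measure_def by blast
  interpret m: measurable_bij \<mu> "borel_of Y" f g by (rule measurable_bij_borel_of[OF hom sets])
  have g: "continuous_map Y X g" using hom unfolding homeomorphic_maps_def by auto
  have hg: "homeomorphic_map Y X g" using hom unfolding homeomorphic_maps_map by auto
  let ?\<nu> = "distr \<mu> (borel_of Y) f"
  have em: "emeasure ?\<nu> B = emeasure \<mu> (g ` B)" if "B \<subseteq> topspace Y" for B
    using m.emeasure_distr_eq_image that by simp
  have compact: "emeasure ?\<nu> K < \<infinity>" if "compactin Y K" for K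
    using r image_compactin[OF that g] em[OF compactin_subset_topspace[OF that]]
    unfolding radon_measure_def by simp
  have outer: "emeasure ?\<nu> A = (INF V \<in> {V. openin Y V \<and> A \<subseteq> V}. emeasure ?\<nu> V)"
    if "A \<in> sets ?\<nu>" for A
  proof -
    have A: "A \<in> sets (borel_of Y)" "A \<subseteq> topspace Y"
      using that sets.sets_into_space[of A "borel_of Y"] by auto
    have "emeasure ?\<nu> A = emeasure \<mu> (g ` A)" using em[OF A(2)] .
    also have "\<dots> = (INF U \<in> {U. openin X U \<and> g ` A \<subseteq> U}. emeasure \<mu> U)"
      using r m.sets_image[OF A(1)] unfolding radon_measure_def by blast
    also have "\<dots> = (INF V \<in> {V. openin Y V \<and> A \<subseteq> V}. emeasure \<mu> (g ` V))"
      unfolding homeomorphic_maps_openin_superset[OF hom A(2)] by (simp add: image_comp)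
    also have "\<dots> = (INF V \<in> {V. openin Y V \<and> A \<subseteq> V}. emeasure ?\<nu> V)"
      by (intro INF_cong refl) (simp add: em openin_subset)
    finally show ?thesis .
  qed
  have inner: "emeasure ?\<nu> U = (SUP K \<in> {K. compactin Y K \<and> K \<subseteq> U}. emeasure ?\<nu> K)"
    if U: "openin Y U" for U
  proof -
    have Uc: "U \<subseteq> topspace Y" using openin_subset[OF U] .
    have "emeasure ?\<nu> U = emeasure \<mu> (g ` U)" using em[OF Uc] .
    also have "\<dots> = (SUP K \<in> {K. compactin X K \<and> K \<subseteq> g ` U}. emeasure \<mu> K)"
      using r homeomorphic_map_openness[OF hg Uc] U unfolding radon_measure_def by blast
    also have "\<dots> = (SUP K \<in> {K. compactin Y K \<and> K \<subseteq> U}. emeasure \<mu> (g ` K))"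
      unfolding homeomorphic_maps_compactin_subset[OF hom Uc] by (simp add: image_comp)
    also have "\<dots> = (SUP K \<in> {K. compactin Y K \<and> K \<subseteq> U}. emeasure ?\<nu> K)"
      by (intro SUP_cong refl) (simp add: em compactin_subset_topspace)
    finally show ?thesis .
  qed
  show ?thesis unfolding radon_measure_def using compact outer inner by simp
qed

lemma openin_quot_top_discrete:
  assumes "group G" "subgroup H G" "topspace T = carrier G" "quot_discrete G T H" "U \<subseteq> rcosets\<^bsub>G\<^esub> H"
  shows "openin (quot_top G T H) U"
proof -
  have "U = \<Union>((\<lambda>C. {C}) ` U)" by blast
  moreover have "\<forall>V\<in>(\<lambda>C. {C}) ` U. openin (quot_top G T H) V"
    using assms(4,5) unfolding quot_discrete_def by blast
  ultimately show ?thesis by (metis openin_Union)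
qed

lemma finite_compactin_quot_top_discrete:
  assumes "group G" "subgroup H G" "topspace T = carrier G" "quot_discrete G T H"
    "compactin (quot_top G T H) K"
  shows "finite K"
proof -
  have K: "K \<subseteq> rcosets\<^bsub>G\<^esub> H" using compactin_subset_topspace[OF assms(5)] topspace_quot_top[OF assms(1-3)] by simp
  have "\<forall>\<U>. (\<forall>U\<in>\<U>. openin (quot_top G T H) U) \<and> K \<subseteq> \<Union>\<U> \<longrightarrow> (\<exists>\<F>. finite \<F> \<and> \<F> \<subseteq> \<U> \<and> K \<subseteq> \<Union>\<F>)"
    using assms(5) unfolding compactin_def by (rule conjunct2)
  from spec[OF this, of "(\<lambda>C. {C}) ` K"] obtain F where F: "finite F" "F \<subseteq> (\<lambda>C. {C}) ` K" "K \<subseteq> \<Union>F"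
    using assms(4) K unfolding quot_discrete_def by blast
  have "\<forall>A\<in>F. finite A" using F(2) by blast
  then have "finite (\<Union>F)" using F(1) by blast
  then show ?thesis using F(3) finite_subset by blast
qed

lemma quot_measureD:
  assumes g: "group G" "subgroup H G" "topspace T = carrier G" and qm: "quot_measure G T H \<nu>"
  shows "sets \<nu> = sets (borel_of (quot_top G T H))" "space \<nu> = rcosets\<^bsub>G\<^esub> H"
    "\<And>K. compactin (quot_top G T H) K \<Longrightarrow> emeasure \<nu> K < \<infinity>"
proof -
  have ts: "topspace (quot_top G T H) = rcosets\<^bsub>G\<^esub> H" using topspace_quot_top[OF g] .
  have "(sets \<nu> = sets (borel_of (quot_top G T H)) \<and> space \<nu> = rcosets\<^bsub>G\<^esub> H) \<and>
      (\<forall>K. compactin (quot_top G T H) K \<longrightarrow> emeasure \<nu> K < \<infinity>)"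
  proof (cases "quot_discrete G T H")
    case True
    then have nu: "\<nu> = count_space (rcosets\<^bsub>G\<^esub> H)" using qm unfolding quot_measure_def by simp
    have "sets (borel_of (quot_top G T H)) = Pow (rcosets\<^bsub>G\<^esub> H)"
      using sets_borel_of_discrete[of "quot_top G T H"] openin_quot_top_discrete[OF g True] ts by simp
    moreover have "emeasure \<nu> K < \<infinity>" if "compactin (quot_top G T H) K" for K
    proof -
      have "finite K" "K \<subseteq> rcosets\<^bsub>G\<^esub> H"
        using finite_compactin_quot_top_discrete[OF g True that] compactin_subset_topspace[OF that] ts by auto
      then show ?thesis using nu emeasure_count_space_finite of_nat_less_top by simp
    qed
    ultimately show ?thesis using nu by simp
  next
    case False
    then have r: "radon_measure (quot_top G T H) \<nu>" using qm unfolding quot_measure_def by simp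
    then have s: "sets \<nu> = sets (borel_of (quot_top G T H))" unfolding radon_measure_def by simp
    moreover have "space \<nu> = rcosets\<^bsub>G\<^esub> H" using sets_eq_imp_space_eq[OF s] ts by simp
    ultimately show ?thesis using r unfolding radon_measure_def by blast
  qed
  then show "sets \<nu> = sets (borel_of (quot_top G T H))" "space \<nu> = rcosets\<^bsub>G\<^esub> H"
    "\<And>K. compactin (quot_top G T H) K \<Longrightarrow> emeasure \<nu> K < \<infinity>" by blast+
qed

lemma L2set_cong:
  assumes "\<And>x. x \<in> space M \<Longrightarrow> f x = g x"
  shows "f \<in> L2set M \<longleftrightarrow> g \<in> L2set M" "l2norm M f = l2norm M g"
proof -
  have "f \<in> borel_measurable M \<longleftrightarrow> g \<in> borel_measurable M" using measurable_cong[of M f g] assms by blast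
  moreover have "integrable M (\<lambda>D. (cmod (f D))\<^sup>2) \<longleftrightarrow> integrable M (\<lambda>D. (cmod (g D))\<^sup>2)"
    using assms by (intro Bochner_Integration.integrable_cong) auto
  ultimately show "f \<in> L2set M \<longleftrightarrow> g \<in> L2set M" unfolding L2set_def by blast
  have "(LINT D|M. (cmod (f D))\<^sup>2) = (LINT D|M. (cmod (g D))\<^sup>2)"
    using assms by (intro Bochner_Integration.integral_cong) auto
  then show "l2norm M f = l2norm M g" unfolding l2norm_def by simp
qed

lemma hconv_cong:
  assumes "\<And>x. x \<in> space M \<Longrightarrow> \<xi> x = \<xi>' x"
  shows "hconv G H M f \<xi> = hconv G H M f \<xi>'"
  unfolding hconv_def using assms by (intro ext Bochner_Integration.integral_cong) auto

locale coset_space_iso =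
  fixes G :: "('a, 'b) monoid_scheme" and T H and G2 :: "('c, 'd) monoid_scheme" and T2 H2
    and \<phi> :: "'a set \<Rightarrow> 'c set" and \<psi> :: "'c set \<Rightarrow> 'a set" and \<pi> :: "'a \<Rightarrow> 'c"
  assumes grp1: "group G" and grp2: "group G2" and sg1: "subgroup H G" and sg2: "subgroup H2 G2"
    and ts1: "topspace T = carrier G" and ts2: "topspace T2 = carrier G2"
    and homeo: "homeomorphic_maps (quot_top G T H) (quot_top G2 T2 H2) \<phi> \<psi>"
    and pi_carrier: "\<And>g. g \<in> carrier G \<Longrightarrow> \<pi> g \<in> carrier G2"
    and compat: "\<And>C g. C \<in> rcosets\<^bsub>G\<^esub> H \<Longrightarrow> g \<in> carrier G \<Longrightarrow> \<phi> (C #>\<^bsub>G\<^esub> g) = \<phi> C #>\<^bsub>G2\<^esub> \<pi> g"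
      "\<And>C g. C \<in> rcosets\<^bsub>G\<^esub> H \<Longrightarrow> g \<in> carrier G \<Longrightarrow>
         \<phi> (C #>\<^bsub>G\<^esub> inv\<^bsub>G\<^esub> g) = \<phi> C #>\<^bsub>G2\<^esub> inv\<^bsub>G2\<^esub> (\<pi> g)"
    and surj: "\<And>g2. g2 \<in> carrier G2 \<Longrightarrow> \<exists>g\<in>carrier G. (g2 \<in> H2 \<longrightarrow> g \<in> H) \<and>
        (\<forall>C\<in>rcosets\<^bsub>G\<^esub> H. \<phi> (C #>\<^bsub>G\<^esub> g) = \<phi> C #>\<^bsub>G2\<^esub> g2)"
    and piH: "\<And>h. h \<in> H \<Longrightarrow> \<pi> h \<in> H2" and phiH: "\<phi> H = H2"
begin

abbreviation "X1 \<equiv> rcosets\<^bsub>G\<^esub> H"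
abbreviation "X2 \<equiv> rcosets\<^bsub>G2\<^esub> H2"
abbreviation "Q1 \<equiv> quot_top G T H"
abbreviation "Q2 \<equiv> quot_top G2 T2 H2"

lemma tsQ1: "topspace Q1 = X1" using topspace_quot_top[OF grp1 sg1 ts1] .
lemma tsQ2: "topspace Q2 = X2" using topspace_quot_top[OF grp2 sg2 ts2] .

lemma cont1: "continuous_map Q1 Q2 \<phi>" and cont2: "continuous_map Q2 Q1 \<psi>"
  using homeo unfolding homeomorphic_maps_def by auto

lemma homeo1: "homeomorphic_map Q1 Q2 \<phi>" and homeo2: "homeomorphic_map Q2 Q1 \<psi>"
  using homeo unfolding homeomorphic_maps_map by auto

lemma phi_rcosets: "C \<in> X1 \<Longrightarrow> \<phi> C \<in> X2"
  using continuous_map_image_subset_topspace[OF cont1] tsQ1 tsQ2 by blast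

lemma psi_rcosets: "C \<in> X2 \<Longrightarrow> \<psi> C \<in> X1"
  using continuous_map_image_subset_topspace[OF cont2] tsQ1 tsQ2 by blast

lemma psi_phi: "C \<in> X1 \<Longrightarrow> \<psi> (\<phi> C) = C"
  using homeo tsQ1 unfolding homeomorphic_maps_def by auto

lemma phi_psi: "C \<in> X2 \<Longrightarrow> \<phi> (\<psi> C) = C"
  using homeo tsQ2 unfolding homeomorphic_maps_def by auto

lemma psi_action:
  assumes C: "C \<in> X2" and g2: "g2 \<in> carrier G2" and g: "g \<in> carrier G"
    and eq: "\<forall>C\<in>X1. \<phi> (C #>\<^bsub>G\<^esub> g) = \<phi> C #>\<^bsub>G2\<^esub> g2"
  shows "\<psi> (C #>\<^bsub>G2\<^esub> g2) = \<psi> C #>\<^bsub>G\<^esub> g"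
proof -
  have "\<psi> C #>\<^bsub>G\<^esub> g \<in> X1" using rcosets_r_coset_closed[OF grp1 sg1 psi_rcosets[OF C] g] .
  moreover have "\<phi> (\<psi> C #>\<^bsub>G\<^esub> g) = C #>\<^bsub>G2\<^esub> g2" using eq psi_rcosets[OF C] phi_psi[OF C] by simp
  ultimately show ?thesis using phi_rcosets psi_phi by metis
qed

lemma quot_discrete_iff: "quot_discrete G T H \<longleftrightarrow> quot_discrete G2 T2 H2"
proof
  assume d: "quot_discrete G T H"
  show "quot_discrete G2 T2 H2" unfolding quot_discrete_def
  proof
    fix C assume C: "C \<in> X2"
    have "openin Q1 {\<psi> C}" using d psi_rcosets[OF C] unfolding quot_discrete_def by blast
    moreover have "{\<psi> C} \<subseteq> topspace Q1" using tsQ1 psi_rcosets[OF C] by simp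
    ultimately have "openin Q2 (\<phi> ` {\<psi> C})" using homeomorphic_map_openness[OF homeo1] by blast
    then show "openin Q2 {C}" using phi_psi[OF C] by simp
  qed
next
  assume d: "quot_discrete G2 T2 H2"
  show "quot_discrete G T H" unfolding quot_discrete_def
  proof
    fix C assume C: "C \<in> X1"
    have "openin Q2 {\<phi> C}" using d phi_rcosets[OF C] unfolding quot_discrete_def by blast
    moreover have "{\<phi> C} \<subseteq> topspace Q2" using tsQ2 phi_rcosets[OF C] by simp
    ultimately have "openin Q1 (\<psi> ` {\<phi> C})" using homeomorphic_map_openness[OF homeo2] by blast
    then show "openin Q1 {C}" using psi_phi[OF C] by simp
  qed
qed

end

context coset_space_iso
begin

lemma psi_image_rcosets: "\<psi> ` X2 = X1"
proof
  show "\<psi> ` X2 \<subseteq> X1" using psi_rcosets by blast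
  show "X1 \<subseteq> \<psi> ` X2" using phi_rcosets psi_phi by (metis image_eqI subsetI)
qed

lemma measurable_bij_quot:
  assumes "quot_measure G T H \<nu>"
  shows "measurable_bij \<nu> (borel_of Q2) \<phi> \<psi>"
  using measurable_bij_borel_of[OF homeo quot_measureD(1)[OF grp1 sg1 ts1 assms]] .

lemma emeasure_distr_quot:
  assumes qm: "quot_measure G T H \<nu>" and B: "B \<subseteq> X2"
  shows "emeasure (distr \<nu> (borel_of Q2) \<phi>) B = emeasure \<nu> (\<psi> ` B)"
proof -
  interpret m: measurable_bij \<nu> "borel_of Q2" \<phi> \<psi> by (rule measurable_bij_quot[OF qm])
  show ?thesis using m.emeasure_distr_eq_image[of B] B tsQ2 by simp
qed

lemma distr_count_space_quot:
  assumes qm: "quot_measure G T H \<nu>" and d: "quot_discrete G T H"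
  shows "distr \<nu> (borel_of Q2) \<phi> = count_space X2"
proof (rule measure_eqI)
  have d2: "quot_discrete G2 T2 H2" using d quot_discrete_iff by simp
  have nu: "\<nu> = count_space X1" using qm d unfolding quot_measure_def by simp
  have s2: "sets (borel_of Q2) = Pow X2"
    using sets_borel_of_discrete[of Q2] openin_quot_top_discrete[OF grp2 sg2 ts2 d2] tsQ2 by simp
  show "sets (distr \<nu> (borel_of Q2) \<phi>) = sets (count_space X2)" using s2 by simp
  fix A assume "A \<in> sets (distr \<nu> (borel_of Q2) \<phi>)"
  then have A: "A \<subseteq> X2" using s2 by simp
  have inj: "inj_on \<psi> A" using A phi_psi by (metis inj_onI subsetD)
  have psiA: "\<psi> ` A \<subseteq> X1" using A psi_rcosets by blast
  have "emeasure (distr \<nu> (borel_of Q2) \<phi>) A = emeasure (count_space X1) (\<psi> ` A)"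
    using emeasure_distr_quot[OF qm A] nu by simp
  also have "\<dots> = emeasure (count_space X2) A"
    using emeasure_count_space[OF psiA] emeasure_count_space[OF A]
      finite_image_iff[OF inj] card_image[OF inj] by simp
  finally show "emeasure (distr \<nu> (borel_of Q2) \<phi>) A = emeasure (count_space X2) A" .
qed

lemma emeasure_distr_r_coset:
  assumes qm: "quot_measure G T H \<nu>"
    and inv: "\<forall>g\<in>carrier G. \<forall>A\<in>sets \<nu>. emeasure \<nu> ((\<lambda>C. C #>\<^bsub>G\<^esub> g) ` A) = emeasure \<nu> A"
    and g2: "g2 \<in> carrier G2" and A: "A \<in> sets (distr \<nu> (borel_of Q2) \<phi>)"
  shows "emeasure (distr \<nu> (borel_of Q2) \<phi>) ((\<lambda>C. C #>\<^bsub>G2\<^esub> g2) ` A) = emeasure (distr \<nu> (borel_of Q2) \<phi>) A"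
proof -
  interpret m: measurable_bij \<nu> "borel_of Q2" \<phi> \<psi> by (rule measurable_bij_quot[OF qm])
  have A: "A \<in> sets (borel_of Q2)" "A \<subseteq> X2"
    using A sets.sets_into_space[of A "borel_of Q2"] tsQ2 by auto
  obtain g where g: "g \<in> carrier G" "\<forall>C\<in>X1. \<phi> (C #>\<^bsub>G\<^esub> g) = \<phi> C #>\<^bsub>G2\<^esub> g2"
    using surj[OF g2] by blast
  have A2: "(\<lambda>C. C #>\<^bsub>G2\<^esub> g2) ` A \<subseteq> X2" using A(2) rcosets_r_coset_closed[OF grp2 sg2 _ g2] by blast
  have "\<psi> ` ((\<lambda>C. C #>\<^bsub>G2\<^esub> g2) ` A) = (\<lambda>C. C #>\<^bsub>G\<^esub> g) ` (\<psi> ` A)"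
    using psi_action[OF _ g2 g(1) g(2)] A(2) by (force simp: image_image)
  then have "emeasure (distr \<nu> (borel_of Q2) \<phi>) ((\<lambda>C. C #>\<^bsub>G2\<^esub> g2) ` A) =
      emeasure \<nu> ((\<lambda>C. C #>\<^bsub>G\<^esub> g) ` (\<psi> ` A))"
    using emeasure_distr_quot[OF qm A2] by simp
  also have "\<dots> = emeasure \<nu> (\<psi> ` A)" using inv g(1) m.sets_image[OF A(1)] by blast
  also have "\<dots> = emeasure (distr \<nu> (borel_of Q2) \<phi>) A" using emeasure_distr_quot[OF qm A(2)] by simp
  finally show ?thesis .
qed

lemma quot_measure_distr:
  assumes qm: "quot_measure G T H \<nu>"
  shows "quot_measure G2 T2 H2 (distr \<nu> (borel_of Q2) \<phi>)"
proof (cases "quot_discrete G T H")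
  case True
  then show ?thesis
    using distr_count_space_quot[OF qm] quot_discrete_iff unfolding quot_measure_def by simp
next
  case False
  then have r: "radon_measure Q1 \<nu>" "emeasure \<nu> (space \<nu>) \<noteq> 0"
    "\<forall>g\<in>carrier G. \<forall>A\<in>sets \<nu>. emeasure \<nu> ((\<lambda>C. C #>\<^bsub>G\<^esub> g) ` A) = emeasure \<nu> A"
    using qm unfolding quot_measure_def by auto
  have "emeasure (distr \<nu> (borel_of Q2) \<phi>) (space (distr \<nu> (borel_of Q2) \<phi>)) \<noteq> 0"
    using emeasure_distr_quot[OF qm, of X2] tsQ2 psi_image_rcosets r(2) quot_measureD(2)[OF grp1 sg1 ts1 qm]
    by simp
  then show ?thesis
    using False quot_discrete_iff radon_measure_distr[OF homeo r(1)] emeasure_distr_r_coset[OF qm r(3)]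
    unfolding quot_measure_def by simp
qed

lemma hecke_alg_pullback:
  assumes f2: "f2 \<in> hecke_alg G2 T2 H2"
  shows "(\<lambda>C. f2 (\<phi> C)) \<in> hecke_alg G T H"
proof -
  have c: "continuous_map Q2 euclidean f2" and inv: "\<forall>C\<in>X2. \<forall>h\<in>H2. f2 (C #>\<^bsub>G2\<^esub> h) = f2 C"
    using f2 unfolding hecke_alg_def by auto
  obtain K2 where K2: "compactin Q2 K2" "\<forall>C\<in>X2 - K2. f2 C = 0" using f2 unfolding hecke_alg_def by blast
  have "continuous_map Q1 euclidean (f2 \<circ> \<phi>)" using continuous_map_compose[OF cont1 c] .
  then have "continuous_map Q1 euclidean (\<lambda>C. f2 (\<phi> C))" by (simp add: o_def)
  moreover have "compactin Q1 (\<psi> ` K2)" using image_compactin[OF K2(1) cont2] .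
  moreover have "\<forall>C\<in>X1 - \<psi> ` K2. f2 (\<phi> C) = 0"
  proof
    fix C assume C: "C \<in> X1 - \<psi> ` K2"
    then have "\<phi> C \<notin> K2" using psi_phi by (metis DiffD1 DiffD2 image_eqI)
    then show "f2 (\<phi> C) = 0" using K2(2) phi_rcosets C by blast
  qed
  moreover have "\<forall>C\<in>X1. \<forall>h\<in>H. f2 (\<phi> (C #>\<^bsub>G\<^esub> h)) = f2 (\<phi> C)"
  proof (intro ballI)
    fix C h assume C: "C \<in> X1" and h: "h \<in> H"
    have hc: "h \<in> carrier G" using subgroup.mem_carrier[OF sg1 h] .
    show "f2 (\<phi> (C #>\<^bsub>G\<^esub> h)) = f2 (\<phi> C)" using compat(1)[OF C hc] inv phi_rcosets[OF C] piH[OF h] by simp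
  qed
  ultimately show ?thesis unfolding hecke_alg_def by blast
qed

lemma hconv_distr:
  assumes qm: "quot_measure G T H \<nu>" and f2inv: "\<forall>C\<in>X2. \<forall>h\<in>H2. f2 (C #>\<^bsub>G2\<^esub> h) = f2 C"
    and C: "C \<in> X1"
  shows "hconv G2 H2 (distr \<nu> (borel_of Q2) \<phi>) f2 \<xi>2 (\<phi> C) = hconv G H \<nu> (\<lambda>C. f2 (\<phi> C)) (\<lambda>D. \<xi>2 (\<phi> D)) C"
proof -
  interpret m: measurable_bij \<nu> "borel_of Q2" \<phi> \<psi> by (rule measurable_bij_quot[OF qm])
  note b = quot_measureD[OF grp1 sg1 ts1 qm]
  have "hconv G2 H2 (distr \<nu> (borel_of Q2) \<phi>) f2 \<xi>2 (\<phi> C) =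
      (LINT D|\<nu>. f2 (\<phi> C #>\<^bsub>G2\<^esub> inv\<^bsub>G2\<^esub> (coset_rep G2 H2 (\<phi> D))) * \<xi>2 (\<phi> D))"
    unfolding hconv_def by (rule m.integral_distr_eq)
  also have "\<dots> = (LINT D|\<nu>. f2 (\<phi> (C #>\<^bsub>G\<^esub> inv\<^bsub>G\<^esub> (coset_rep G H D))) * \<xi>2 (\<phi> D))"
  proof (rule Bochner_Integration.integral_cong[OF refl])
    fix D assume "D \<in> space \<nu>"
    then have D: "D \<in> X1" using b(2) by simp
    let ?r = "coset_rep G H D"
    have r: "?r \<in> carrier G" "D = H #>\<^bsub>G\<^esub> ?r" using coset_rep[OF grp1 sg1 D] by auto
    let ?p = "\<pi> ?r"
    have p: "?p \<in> carrier G2" using pi_carrier[OF r(1)] .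
    have HX: "H \<in> X1" using subgroup.subgroup_in_rcosets[OF sg1 grp1] .
    have "\<phi> D = H2 #>\<^bsub>G2\<^esub> ?p" using compat(1)[OF HX r(1)] r(2) phiH by simp
    then obtain h where h: "h \<in> H2" "coset_rep G2 H2 (\<phi> D) = h \<otimes>\<^bsub>G2\<^esub> ?p"
      using coset_rep_r_coset[OF grp2 sg2 p] by metis
    have hc: "h \<in> carrier G2" "inv\<^bsub>G2\<^esub> h \<in> H2"
      using subgroup.mem_carrier[OF sg2 h(1)] subgroup.m_inv_closed[OF sg2 h(1)] by auto
    have phiC: "\<phi> C \<in> X2" using phi_rcosets[OF C] .
    have phiCc: "\<phi> C \<subseteq> carrier G2" using subgroup.rcosets_carrier[OF sg2 grp2 phiC] .
    have ip: "inv\<^bsub>G2\<^esub> ?p \<in> carrier G2" using group.inv_closed[OF grp2 p] .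
    have ih: "inv\<^bsub>G2\<^esub> h \<in> carrier G2" using group.inv_closed[OF grp2 hc(1)] .
    have "\<phi> C #>\<^bsub>G2\<^esub> inv\<^bsub>G2\<^esub> (coset_rep G2 H2 (\<phi> D)) = (\<phi> C #>\<^bsub>G2\<^esub> inv\<^bsub>G2\<^esub> ?p) #>\<^bsub>G2\<^esub> inv\<^bsub>G2\<^esub> h"
      using h(2) group.inv_mult_group[OF grp2 hc(1) p] group.coset_mult_assoc[OF grp2 phiCc ip ih] by simp
    then have "f2 (\<phi> C #>\<^bsub>G2\<^esub> inv\<^bsub>G2\<^esub> (coset_rep G2 H2 (\<phi> D))) = f2 (\<phi> C #>\<^bsub>G2\<^esub> inv\<^bsub>G2\<^esub> ?p)"
      using f2inv rcosets_r_coset_closed[OF grp2 sg2 phiC ip] hc(2) by simp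
    also have "\<dots> = f2 (\<phi> (C #>\<^bsub>G\<^esub> inv\<^bsub>G\<^esub> ?r))" using compat(2)[OF C r(1)] by simp
    finally show "f2 (\<phi> C #>\<^bsub>G2\<^esub> inv\<^bsub>G2\<^esub> (coset_rep G2 H2 (\<phi> D))) * \<xi>2 (\<phi> D) =
        f2 (\<phi> (C #>\<^bsub>G\<^esub> inv\<^bsub>G\<^esub> ?r)) * \<xi>2 (\<phi> D)" by simp
  qed
  also have "\<dots> = hconv G H \<nu> (\<lambda>C. f2 (\<phi> C)) (\<lambda>D. \<xi>2 (\<phi> D)) C" unfolding hconv_def by simp
  finally show ?thesis .
qed

lemma l2norm_hconv_distr:
  assumes qm: "quot_measure G T H \<nu>" and f2inv: "\<forall>C\<in>X2. \<forall>h\<in>H2. f2 (C #>\<^bsub>G2\<^esub> h) = f2 C"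
  shows "l2norm (distr \<nu> (borel_of Q2) \<phi>) (hconv G2 H2 (distr \<nu> (borel_of Q2) \<phi>) f2 \<xi>2) =
    l2norm \<nu> (hconv G H \<nu> (\<lambda>C. f2 (\<phi> C)) (\<lambda>D. \<xi>2 (\<phi> D)))"
proof -
  interpret m: measurable_bij \<nu> "borel_of Q2" \<phi> \<psi> by (rule measurable_bij_quot[OF qm])
  show ?thesis
    unfolding m.l2norm_distr
    using hconv_distr[OF qm f2inv] quot_measureD(2)[OF grp1 sg1 ts1 qm] by (intro L2set_cong(2)) simp
qed

lemma L2set_compose_psi:
  assumes qm: "quot_measure G T H \<nu>" and \<xi>: "\<xi> \<in> L2set \<nu>"
  shows "(\<lambda>C. \<xi> (\<psi> C)) \<in> L2set (distr \<nu> (borel_of Q2) \<phi>)"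
    "l2norm (distr \<nu> (borel_of Q2) \<phi>) (\<lambda>C. \<xi> (\<psi> C)) = l2norm \<nu> \<xi>"
    "hconv G H \<nu> f (\<lambda>x. \<xi> (\<psi> (\<phi> x))) = hconv G H \<nu> f \<xi>"
proof -
  interpret m: measurable_bij \<nu> "borel_of Q2" \<phi> \<psi> by (rule measurable_bij_quot[OF qm])
  have eq: "\<And>x. x \<in> space \<nu> \<Longrightarrow> \<xi> (\<psi> (\<phi> x)) = \<xi> x"
    using quot_measureD(2)[OF grp1 sg1 ts1 qm] psi_phi by simp
  show "(\<lambda>C. \<xi> (\<psi> C)) \<in> L2set (distr \<nu> (borel_of Q2) \<phi>)"
    using L2set_cong(1)[of \<nu> "\<lambda>x. \<xi> (\<psi> (\<phi> x))" \<xi>, OF eq] \<xi> m.L2set_distr_iff by simp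
  show "l2norm (distr \<nu> (borel_of Q2) \<phi>) (\<lambda>C. \<xi> (\<psi> C)) = l2norm \<nu> \<xi>"
    using L2set_cong(2)[of \<nu> "\<lambda>x. \<xi> (\<psi> (\<phi> x))" \<xi>, OF eq] m.l2norm_distr by simp
  show "hconv G H \<nu> f (\<lambda>x. \<xi> (\<psi> (\<phi> x))) = hconv G H \<nu> f \<xi>"
    using hconv_cong[of \<nu> "\<lambda>x. \<xi> (\<psi> (\<phi> x))" \<xi>, OF eq] .
qed

lemma lambda_bound_distr_iff:
  assumes qm: "quot_measure G T H \<nu>" and f2inv: "\<forall>C\<in>X2. \<forall>h\<in>H2. f2 (C #>\<^bsub>G2\<^esub> h) = f2 C"
  shows "(\<forall>\<xi>\<in>L2set (distr \<nu> (borel_of Q2) \<phi>).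
      l2norm (distr \<nu> (borel_of Q2) \<phi>) (hconv G2 H2 (distr \<nu> (borel_of Q2) \<phi>) f2 \<xi>)
        \<le> M * l2norm (distr \<nu> (borel_of Q2) \<phi>) \<xi>) \<longleftrightarrow>
    (\<forall>\<xi>\<in>L2set \<nu>. l2norm \<nu> (hconv G H \<nu> (\<lambda>C. f2 (\<phi> C)) \<xi>) \<le> M * l2norm \<nu> \<xi>)"
    (is "?B2 \<longleftrightarrow> ?B1")
proof
  interpret m: measurable_bij \<nu> "borel_of Q2" \<phi> \<psi> by (rule measurable_bij_quot[OF qm])
  note key = l2norm_hconv_distr[OF qm f2inv]
  show ?B1 if B2: ?B2
  proof
    fix \<xi> assume \<xi>: "\<xi> \<in> L2set \<nu>"
    note \<xi>2 = L2set_compose_psi[OF qm \<xi>]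
    have "l2norm \<nu> (hconv G H \<nu> (\<lambda>C. f2 (\<phi> C)) \<xi>) =
        l2norm (distr \<nu> (borel_of Q2) \<phi>) (hconv G2 H2 (distr \<nu> (borel_of Q2) \<phi>) f2 (\<lambda>C. \<xi> (\<psi> C)))"
      using key \<xi>2(3) by simp
    also have "\<dots> \<le> M * l2norm \<nu> \<xi>" using B2 \<xi>2(1,2) by force
    finally show "l2norm \<nu> (hconv G H \<nu> (\<lambda>C. f2 (\<phi> C)) \<xi>) \<le> M * l2norm \<nu> \<xi>" .
  qed
  show ?B2 if B1: ?B1
    using B1 key m.L2set_distr_iff m.l2norm_distr by simp
qed

lemma lambda_norm_distr:
  assumes qm: "quot_measure G T H \<nu>" and f2inv: "\<forall>C\<in>X2. \<forall>h\<in>H2. f2 (C #>\<^bsub>G2\<^esub> h) = f2 C"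
  shows "lambda_norm G2 H2 (distr \<nu> (borel_of Q2) \<phi>) f2 = lambda_norm G H \<nu> (\<lambda>C. f2 (\<phi> C))"
  unfolding lambda_norm_def using lambda_bound_distr_iff[OF qm f2inv] by simp

lemma RD_integral_distr:
  assumes qm: "quot_measure G T H \<nu>"
    and w: "\<And>C. C \<in> X1 \<Longrightarrow> w2 (coset_rep G2 H2 (\<phi> C)) = w1 (coset_rep G H C)"
  shows "(LINT C|distr \<nu> (borel_of Q2) \<phi>. (cmod (f2 C))\<^sup>2 * (1 + w2 (coset_rep G2 H2 C)) powr (2 * s)) =
    (LINT C|\<nu>. (cmod (f2 (\<phi> C)))\<^sup>2 * (1 + w1 (coset_rep G H C)) powr (2 * s))"
proof -
  interpret m: measurable_bij \<nu> "borel_of Q2" \<phi> \<psi> by (rule measurable_bij_quot[OF qm])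
  have "(LINT C|distr \<nu> (borel_of Q2) \<phi>. (cmod (f2 C))\<^sup>2 * (1 + w2 (coset_rep G2 H2 C)) powr (2 * s)) =
      (LINT C|\<nu>. (cmod (f2 (\<phi> C)))\<^sup>2 * (1 + w2 (coset_rep G2 H2 (\<phi> C))) powr (2 * s))"
    by (rule m.integral_distr_eq)
  also have "\<dots> = (LINT C|\<nu>. (cmod (f2 (\<phi> C)))\<^sup>2 * (1 + w1 (coset_rep G H C)) powr (2 * s))"
    using w quot_measureD(2)[OF grp1 sg1 ts1 qm] by (intro Bochner_Integration.integral_cong) auto
  finally show ?thesis .
qed

end
section \<open>The quotient pair \<open>(G/N, H/N)\<close>\<close>

locale normal_quotient =
  fixes G (structure) and T H N
  assumes lcg: "lc_group G T" and sg: "subgroup H G" and nN: "N \<lhd> G" and NH: "N \<subseteq> H"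
begin

abbreviation "G' \<equiv> G Mod N"
abbreviation "TN \<equiv> quot_top G T N"
abbreviation "H' \<equiv> quot_sub G N H"
definition proj_rcos :: "'a set \<Rightarrow> 'a set set" where "proj_rcos C = (\<lambda>y. N #> y) ` C"
definition union_rcos :: "'a set set \<Rightarrow> 'a set" where "union_rcos C = \<Union>C"

lemma grp: "group G" using lc_groupD[OF lcg] by simp
lemma ts: "topspace T = carrier G" using lc_groupD[OF lcg] by simp
lemma sgN: "subgroup N G" using nN normal_imp_subgroup by blast
lemma grp': "group G'" using normal.factorgroup_is_group[OF nN] .
lemma carrier_quotient: "carrier G' = rcosets N" by (simp add: FactGroup_def)
lemma topspace_TN: "topspace TN = carrier G'" using topspace_quot_top[OF grp sgN ts] carrier_quotient by simp

lemma rcos_mult_quotient: "x \<in> carrier G \<Longrightarrow> y \<in> carrier G \<Longrightarrow> (N #> x) \<otimes>\<^bsub>G'\<^esub> (N #> y) = N #> (x \<otimes> y)"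
  using normal.rcos_sum[OF nN] by simp

lemma inv_rcos_quotient: "x \<in> carrier G \<Longrightarrow> inv\<^bsub>G'\<^esub> (N #> x) = N #> inv x"
proof -
  assume x: "x \<in> carrier G"
  have "N #> x \<in> carrier G'" using carrier_quotient group.rcosetsI[OF grp subgroup.subset[OF sgN] x] by simp
  then show ?thesis using normal.inv_FactGroup[OF nN] normal.rcos_inv[OF nN x] by simp
qed

lemma rcos_in_quotient: "x \<in> carrier G \<Longrightarrow> N #> x \<in> carrier G'"
  using carrier_quotient group.rcosetsI[OF grp subgroup.subset[OF sgN]] by simp

lemma r_coset_quotient: "A \<subseteq> carrier G' \<Longrightarrow> A #>\<^bsub>G'\<^esub> Y = (\<lambda>a. a \<otimes>\<^bsub>G'\<^esub> Y) ` A"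
  unfolding r_coset_def by auto

lemma proj_rcos_r_coset:
  assumes C: "C \<subseteq> carrier G" and g: "g \<in> carrier G"
  shows "proj_rcos (C #> g) = proj_rcos C #>\<^bsub>G'\<^esub> (N #> g)"
proof -
  have "proj_rcos C \<subseteq> carrier G'" unfolding proj_rcos_def using C rcos_in_quotient by blast
  then have "proj_rcos C #>\<^bsub>G'\<^esub> (N #> g) = (\<lambda>a. a \<otimes>\<^bsub>G'\<^esub> (N #> g)) ` ((\<lambda>y. N #> y) ` C)"
    using r_coset_quotient unfolding proj_rcos_def by blast
  also have "\<dots> = (\<lambda>y. (N #> y) \<otimes>\<^bsub>G'\<^esub> (N #> g)) ` C" by (simp add: image_image)
  also have "\<dots> = (\<lambda>y. N #> (y \<otimes> g)) ` C"
    using rcos_mult_quotient C g by (intro image_cong refl) auto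
  also have "\<dots> = proj_rcos (C #> g)" unfolding proj_rcos_def r_coset_def by auto
  finally show ?thesis by simp
qed

lemma proj_rcos_H: "proj_rcos H = H'" unfolding proj_rcos_def quot_sub_def by simp

lemma subgroup_H': "subgroup H' G'"
proof (rule group.subgroupI[OF grp'])
  have Hc: "H \<subseteq> carrier G" using subgroup.subset[OF sg] .
  show "H' \<subseteq> carrier G'" unfolding quot_sub_def using Hc rcos_in_quotient by blast
  show "H' \<noteq> {}" unfolding quot_sub_def using subgroup.one_closed[OF sg] by blast
  fix a b assume a: "a \<in> H'" and b: "b \<in> H'"
  obtain h where h: "h \<in> H" "a = N #> h" using a unfolding quot_sub_def by blast
  obtain k where k: "k \<in> H" "b = N #> k" using b unfolding quot_sub_def by blast
  show "inv\<^bsub>G'\<^esub> a \<in> H'" using inv_rcos_quotient[of h] h Hc subgroup.m_inv_closed[OF sg h(1)] unfolding quot_sub_def by auto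
  show "a \<otimes>\<^bsub>G'\<^esub> b \<in> H'" using rcos_mult_quotient[of h k] h k Hc subgroup.m_closed[OF sg h(1) k(1)]
    unfolding quot_sub_def by auto
qed

lemma union_proj_rcos: "C \<in> rcosets H \<Longrightarrow> union_rcos (proj_rcos C) = C"
proof -
  assume C: "C \<in> rcosets H"
  show ?thesis unfolding union_rcos_def proj_rcos_def
  proof (rule Set.set_eqI, rule iffI)
    fix z assume "z \<in> \<Union>((\<lambda>y. N #> y) ` C)"
    then obtain y where y: "y \<in> C" "z \<in> N #> y" by blast
    then obtain n where "n \<in> N" "z = n \<otimes> y" unfolding r_coset_def by blast
    moreover have "C = H #> y" using rcos_of_mem_rcosets[OF grp sg C y(1)] .
    ultimately show "z \<in> C" using NH unfolding r_coset_def by blast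
  next
    fix z assume z: "z \<in> C"
    then have "z \<in> carrier G" using subgroup.rcosets_carrier[OF sg grp C] by blast
    then have "z \<in> N #> z" using group.rcos_self[OF grp _ sgN] by blast
    then show "z \<in> \<Union>((\<lambda>y. N #> y) ` C)" using z by blast
  qed
qed

lemma proj_rcos_coset: "x \<in> carrier G \<Longrightarrow> proj_rcos (H #> x) = H' #>\<^bsub>G'\<^esub> (N #> x)"
  using proj_rcos_r_coset[OF subgroup.subset[OF sg]] proj_rcos_H by simp

lemma rcosets_H'_eq_image: "rcosets\<^bsub>G'\<^esub> H' = proj_rcos ` (rcosets H)"
proof (rule Set.set_eqI, rule iffI)
  fix C2 assume "C2 \<in> rcosets\<^bsub>G'\<^esub> H'"
  then obtain Y where Y: "Y \<in> carrier G'" "C2 = H' #>\<^bsub>G'\<^esub> Y" unfolding RCOSETS_def by blast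
  then obtain x where x: "x \<in> carrier G" "Y = N #> x" using carrier_quotient unfolding RCOSETS_def by auto
  then have "C2 = proj_rcos (H #> x)" using proj_rcos_coset Y by simp
  moreover have "H #> x \<in> rcosets H" using group.rcosetsI[OF grp subgroup.subset[OF sg] x(1)] .
  ultimately show "C2 \<in> proj_rcos ` (rcosets H)" by blast
next
  fix C2 assume "C2 \<in> proj_rcos ` (rcosets H)"
  then obtain x where x: "x \<in> carrier G" "C2 = proj_rcos (H #> x)" unfolding RCOSETS_def by blast
  then have "C2 = H' #>\<^bsub>G'\<^esub> (N #> x)" using proj_rcos_coset by simp
  then show "C2 \<in> rcosets\<^bsub>G'\<^esub> H'" using rcos_in_quotient[OF x(1)] unfolding RCOSETS_def by blast
qed

lemma proj_rcos_rcosets: "C \<in> rcosets H \<Longrightarrow> proj_rcos C \<in> rcosets\<^bsub>G'\<^esub> H'"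
  using rcosets_H'_eq_image by auto

lemma union_rcos_rcosets: "C \<in> rcosets\<^bsub>G'\<^esub> H' \<Longrightarrow> union_rcos C \<in> rcosets H"
  using rcosets_H'_eq_image union_proj_rcos by auto

lemma proj_union_rcos: "C \<in> rcosets\<^bsub>G'\<^esub> H' \<Longrightarrow> proj_rcos (union_rcos C) = C"
  using rcosets_H'_eq_image union_proj_rcos by auto

lemma openin_quot_top_H':
  "openin (quot_top G' TN H') U \<longleftrightarrow> U \<subseteq> rcosets\<^bsub>G'\<^esub> H' \<and> openin T (\<Union>(union_rcos ` U))"
proof -
  have "openin (quot_top G' TN H') U \<longleftrightarrow> U \<subseteq> rcosets\<^bsub>G'\<^esub> H' \<and> openin TN (\<Union>U)"
    using openin_quot_top[OF grp' subgroup_H'] .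
  moreover have "U \<subseteq> rcosets\<^bsub>G'\<^esub> H' \<Longrightarrow> \<Union>U \<subseteq> rcosets N"
    using subgroup.rcosets_carrier[OF subgroup_H' grp'] carrier_quotient by blast
  moreover have "\<Union>(\<Union>U) = \<Union>(union_rcos ` U)" unfolding union_rcos_def by blast
  ultimately show ?thesis using openin_quot_top[OF grp sgN] by auto
qed

lemma continuous_map_proj_rcos: "continuous_map (quot_top G T H) (quot_top G' TN H') proj_rcos"
  unfolding continuous_map_def
proof (intro conjI allI impI)
  show "proj_rcos \<in> topspace (quot_top G T H) \<rightarrow> topspace (quot_top G' TN H')"
    using topspace_quot_top[OF grp sg ts] topspace_quot_top[OF grp' subgroup_H' topspace_TN] proj_rcos_rcosets union_proj_rcos by auto
  fix U assume "openin (quot_top G' TN H') U"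
  then have U: "U \<subseteq> rcosets\<^bsub>G'\<^esub> H'" "openin T (\<Union>(union_rcos ` U))" using openin_quot_top_H' by auto
  have "{x \<in> topspace (quot_top G T H). proj_rcos x \<in> U} = union_rcos ` U"
  proof (rule Set.set_eqI, rule iffI)
    fix C assume "C \<in> {x \<in> topspace (quot_top G T H). proj_rcos x \<in> U}"
    then have "C \<in> rcosets H" "proj_rcos C \<in> U" using topspace_quot_top[OF grp sg ts] by auto
    then show "C \<in> union_rcos ` U" using union_proj_rcos by (metis image_eqI)
  next
    fix C assume "C \<in> union_rcos ` U"
    then obtain C2 where "C2 \<in> U" "C = union_rcos C2" by blast
    then show "C \<in> {x \<in> topspace (quot_top G T H). proj_rcos x \<in> U}"
      using U(1) union_rcos_rcosets proj_union_rcos topspace_quot_top[OF grp sg ts] by auto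
  qed
  moreover have "union_rcos ` U \<subseteq> rcosets H" using U(1) union_rcos_rcosets proj_union_rcos by blast
  ultimately show "openin (quot_top G T H) {x \<in> topspace (quot_top G T H). proj_rcos x \<in> U}"
    using openin_quot_top[OF grp sg] U(2) by simp
qed

lemma continuous_map_union_rcos: "continuous_map (quot_top G' TN H') (quot_top G T H) union_rcos"
  unfolding continuous_map_def
proof (intro conjI allI impI)
  show "union_rcos \<in> topspace (quot_top G' TN H') \<rightarrow> topspace (quot_top G T H)"
    using topspace_quot_top[OF grp sg ts] topspace_quot_top[OF grp' subgroup_H' topspace_TN] union_rcos_rcosets proj_union_rcos by auto
  fix U assume "openin (quot_top G T H) U"
  then have U: "U \<subseteq> rcosets H" "openin T (\<Union>U)" using openin_quot_top[OF grp sg] by auto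
  have eq: "{x \<in> topspace (quot_top G' TN H'). union_rcos x \<in> U} = proj_rcos ` U"
  proof (rule Set.set_eqI, rule iffI)
    fix C assume "C \<in> {x \<in> topspace (quot_top G' TN H'). union_rcos x \<in> U}"
    then have "C \<in> rcosets\<^bsub>G'\<^esub> H'" "union_rcos C \<in> U" using topspace_quot_top[OF grp' subgroup_H' topspace_TN] by auto
    then show "C \<in> proj_rcos ` U" using proj_union_rcos by (metis image_eqI)
  next
    fix C assume "C \<in> proj_rcos ` U"
    then obtain C1 where "C1 \<in> U" "C = proj_rcos C1" by blast
    then show "C \<in> {x \<in> topspace (quot_top G' TN H'). union_rcos x \<in> U}"
      using U(1) proj_rcos_rcosets union_proj_rcos topspace_quot_top[OF grp' subgroup_H' topspace_TN] by auto
  qed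
  have "union_rcos ` (proj_rcos ` U) = U" using U(1) union_proj_rcos by (force simp: image_image)
  moreover have "proj_rcos ` U \<subseteq> rcosets\<^bsub>G'\<^esub> H'" using U(1) proj_rcos_rcosets union_proj_rcos by blast
  ultimately show "openin (quot_top G' TN H') {x \<in> topspace (quot_top G' TN H'). union_rcos x \<in> U}"
    unfolding eq using openin_quot_top_H' U(2) by simp
qed

lemma coset_rep_N: "Y \<in> carrier G' \<Longrightarrow> coset_rep G N Y \<in> carrier G \<and> Y = N #> coset_rep G N Y"
  using coset_rep[OF grp sgN] carrier_quotient by auto

lemma coset_rep_N_H: "Y \<in> H' \<Longrightarrow> coset_rep G N Y \<in> H"
proof -
  assume Y: "Y \<in> H'"
  then obtain h where h: "h \<in> H" "Y = N #> h" unfolding quot_sub_def by blast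
  have hc: "h \<in> carrier G" using subgroup.mem_carrier[OF sg h(1)] .
  then have "Y \<in> rcosets N" using h group.rcosetsI[OF grp subgroup.subset[OF sgN]] by blast
  then have "coset_rep G N Y \<in> Y" using coset_rep(3)[OF grp sgN] by blast
  then obtain n where n: "n \<in> N" "coset_rep G N Y = n \<otimes> h" using h unfolding r_coset_def by blast
  have "n \<in> H" using n(1) NH by blast
  then have "n \<otimes> h \<in> H" using subgroup.m_closed[OF sg _ h(1)] by blast
  then show ?thesis using n(2) by simp
qed

lemma homeomorphic_maps_proj_union:
  "homeomorphic_maps (quot_top G T H) (quot_top G' TN H') proj_rcos union_rcos"
  unfolding homeomorphic_maps_def
  using continuous_map_proj_rcos continuous_map_union_rcos union_proj_rcos proj_union_rcos
    topspace_quot_top[OF grp sg ts] topspace_quot_top[OF grp' subgroup_H' topspace_TN] by auto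

lemma union_rcos_r_coset:
  assumes C2: "C2 \<in> rcosets\<^bsub>G'\<^esub> H'" and x: "x \<in> carrier G"
  shows "union_rcos (C2 #>\<^bsub>G'\<^esub> (N #> x)) = union_rcos C2 #> x"
proof -
  have C: "union_rcos C2 \<in> rcosets H" using union_rcos_rcosets[OF C2] .
  have "proj_rcos (union_rcos C2 #> x) = C2 #>\<^bsub>G'\<^esub> (N #> x)"
    using proj_rcos_r_coset[OF subgroup.rcosets_carrier[OF sg grp C] x] proj_union_rcos[OF C2] by simp
  moreover have "union_rcos C2 #> x \<in> rcosets H" using rcosets_r_coset_closed[OF grp sg C x] .
  ultimately show ?thesis using union_proj_rcos by metis
qed

lemma coset_space_iso_proj: "coset_space_iso G T H G' TN H' proj_rcos union_rcos (\<lambda>g. N #> g)"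
proof (rule coset_space_iso.intro)
  show "group G" by (rule grp)
  show "group G'" by (rule grp')
  show "subgroup H G" by (rule sg)
  show "subgroup H' G'" by (rule subgroup_H')
  show "topspace T = carrier G" by (rule ts)
  show "topspace TN = carrier G'" by (rule topspace_TN)
  show "homeomorphic_maps (quot_top G T H) (quot_top G' TN H') proj_rcos union_rcos"
    by (rule homeomorphic_maps_proj_union)
  show "\<And>g. g \<in> carrier G \<Longrightarrow> N #> g \<in> carrier G'" by (rule rcos_in_quotient)
  show "\<And>h. h \<in> H \<Longrightarrow> N #> h \<in> H'" unfolding quot_sub_def by blast
  show "proj_rcos H = H'" by (rule proj_rcos_H)
  fix C g assume C: "C \<in> rcosets H" and g: "g \<in> carrier G"
  have Cc: "C \<subseteq> carrier G" using subgroup.rcosets_carrier[OF sg grp C] .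
  show "proj_rcos (C #> g) = proj_rcos C #>\<^bsub>G'\<^esub> (N #> g)" using proj_rcos_r_coset[OF Cc g] .
  show "proj_rcos (C #> inv g) = proj_rcos C #>\<^bsub>G'\<^esub> inv\<^bsub>G'\<^esub> (N #> g)"
    using proj_rcos_r_coset[OF Cc group.inv_closed[OF grp g]] inv_rcos_quotient[OF g] by simp
next
  fix g2 assume g2: "g2 \<in> carrier G'"
  let ?g = "coset_rep G N g2"
  have g: "?g \<in> carrier G" "g2 = N #> ?g" using coset_rep_N[OF g2] by auto
  show "\<exists>g\<in>carrier G. (g2 \<in> H' \<longrightarrow> g \<in> H) \<and> (\<forall>C\<in>rcosets H. proj_rcos (C #> g) = proj_rcos C #>\<^bsub>G'\<^esub> g2)"
    using g coset_rep_N_H proj_rcos_r_coset[OF subgroup.rcosets_carrier[OF sg grp] g(1)] by metis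
qed

lemma coset_space_iso_lift: "coset_space_iso G' TN H' G T H union_rcos proj_rcos (coset_rep G N)"
proof (rule coset_space_iso.intro)
  show "group G" by (rule grp)
  show "group G'" by (rule grp')
  show "subgroup H G" by (rule sg)
  show "subgroup H' G'" by (rule subgroup_H')
  show "topspace T = carrier G" by (rule ts)
  show "topspace TN = carrier G'" by (rule topspace_TN)
  show "homeomorphic_maps (quot_top G' TN H') (quot_top G T H) union_rcos proj_rcos"
    using homeomorphic_maps_proj_union homeomorphic_maps_sym by blast
  show "\<And>g. g \<in> carrier G' \<Longrightarrow> coset_rep G N g \<in> carrier G" using coset_rep_N by blast
  show "\<And>h. h \<in> H' \<Longrightarrow> coset_rep G N h \<in> H" using coset_rep_N_H by blast
  show "union_rcos H' = H"
    using union_proj_rcos proj_rcos_H subgroup.subgroup_in_rcosets[OF sg grp] by metis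
  fix C2 Y assume C2: "C2 \<in> rcosets\<^bsub>G'\<^esub> H'" and Y: "Y \<in> carrier G'"
  have y: "coset_rep G N Y \<in> carrier G" "Y = N #> coset_rep G N Y" using coset_rep_N[OF Y] by auto
  show "union_rcos (C2 #>\<^bsub>G'\<^esub> Y) = union_rcos C2 #> coset_rep G N Y"
    using union_rcos_r_coset[OF C2 y(1)] y(2) by simp
  have "inv\<^bsub>G'\<^esub> Y = N #> inv (coset_rep G N Y)" using inv_rcos_quotient[OF y(1)] y(2) by simp
  then show "union_rcos (C2 #>\<^bsub>G'\<^esub> inv\<^bsub>G'\<^esub> Y) = union_rcos C2 #> inv (coset_rep G N Y)"
    using union_rcos_r_coset[OF C2 group.inv_closed[OF grp y(1)]] by simp
next
  fix g assume g: "g \<in> carrier G"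
  show "\<exists>g2\<in>carrier G'. (g \<in> H \<longrightarrow> g2 \<in> H') \<and> (\<forall>C\<in>rcosets\<^bsub>G'\<^esub> H'. union_rcos (C #>\<^bsub>G'\<^esub> g2) = union_rcos C #> g)"
    using rcos_in_quotient[OF g] union_rcos_r_coset[OF _ g] unfolding quot_sub_def by blast
qed

end
section \<open>Transfer of property (RD)\<close>

context bounded_length
begin

lemma integrable_RD_weight:
  assumes qm: "quot_measure G T H \<nu>" and f: "f \<in> hecke_alg G T H" and s: "0 \<le> s"
  shows "integrable \<nu> (\<lambda>C. (cmod (f C))\<^sup>2 * (1 + reg_len T H l (coset_rep G H C)) powr (2 * s))"
proof -
  let ?Q = "quot_top G T H"
  note b = quot_measureD[OF grp sg ts qm]
  have fc: "continuous_map ?Q euclidean f" using f unfolding hecke_alg_def by blast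
  have mf: "f \<in> borel_measurable \<nu>"
    using continuous_map_borel_measurable[OF fc] measurable_cong_sets[OF b(1) refl] by blast
  have ml: "(\<lambda>C. reg_len T H l (coset_rep G H C)) \<in> borel_measurable \<nu>"
    using reg_len_measurable[OF sg order_refl] measurable_cong_sets[OF b(1) refl] by blast
  note [measurable] = mf ml
  have meas: "(\<lambda>C. (cmod (f C))\<^sup>2 * (1 + reg_len T H l (coset_rep G H C)) powr (2 * s)) \<in> borel_measurable \<nu>"
    by measurable
  obtain K where K: "compactin ?Q K" "\<forall>C\<in>rcosets H - K. f C = 0" using f unfolding hecke_alg_def by blast
  have Ks: "K \<in> sets \<nu>"
    using closedin_borel_of[OF compactin_imp_closedin[OF Hausdorff_space_quot_top[OF lcg sg cl] K(1)]] b(1) by simp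
  have Kf: "emeasure \<nu> K < \<infinity>" using b(3)[OF K(1)] .
  have "compact (f ` K)" using image_compactin[OF K(1) fc] by simp
  then obtain Bf where Bf: "\<forall>z\<in>f ` K. norm z \<le> Bf" using compact_imp_bounded bounded_pos by metis
  obtain Bl where Bl: "\<forall>C\<in>K. reg_len T H l (coset_rep G H C) \<le> Bl" using reg_len_compact_bound[OF K(1)] by blast
  have Ksub: "K \<subseteq> rcosets H" using compactin_subset_topspace[OF K(1)] topspace_quot_top[OF grp sg ts] by simp
  have bound: "norm ((cmod (f C))\<^sup>2 * (1 + reg_len T H l (coset_rep G H C)) powr (2 * s)) \<le> Bf\<^sup>2 * (1 + Bl) powr (2 * s)"
    if C: "C \<in> K" for C
  proof -
    have rc: "coset_rep G H C \<in> carrier G" using coset_rep(1)[OF grp sg] Ksub C by blast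
    have l0: "0 \<le> reg_len T H l (coset_rep G H C)" using reg_len_nonneg[OF rc] .
    have a: "(cmod (f C))\<^sup>2 \<le> Bf\<^sup>2" using Bf C by (intro power_mono) auto
    have bb: "(1 + reg_len T H l (coset_rep G H C)) powr (2 * s) \<le> (1 + Bl) powr (2 * s)"
      using Bl C l0 s by (intro powr_mono2) auto
    have "norm ((cmod (f C))\<^sup>2 * (1 + reg_len T H l (coset_rep G H C)) powr (2 * s)) =
        (cmod (f C))\<^sup>2 * (1 + reg_len T H l (coset_rep G H C)) powr (2 * s)" using l0 by simp
    also have "\<dots> \<le> Bf\<^sup>2 * (1 + Bl) powr (2 * s)" using a bb by (intro mult_mono) auto
    finally show ?thesis .
  qed
  show ?thesis
  proof (rule integrableI_bounded_set[OF Ks meas Kf])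
    show "AE x\<in>K in \<nu>. norm ((cmod (f x))\<^sup>2 * (1 + reg_len T H l (coset_rep G H x)) powr (2 * s)) \<le> Bf\<^sup>2 * (1 + Bl) powr (2 * s)"
      using bound by auto
    show "AE x in \<nu>. x \<notin> K \<longrightarrow> (cmod (f x))\<^sup>2 * (1 + reg_len T H l (coset_rep G H x)) powr (2 * s) = 0"
      using K(2) b(2) by auto
  qed
qed


lemma RD_integral_le_reg_len:
  assumes qm: "quot_measure G T H \<nu>" and f: "f \<in> hecke_alg G T H" and s: "0 \<le> s"
  shows "(LINT C|\<nu>. (cmod (f C))\<^sup>2 * (1 + l (coset_rep G H C)) powr (2 * s))
    \<le> (LINT C|\<nu>. (cmod (f C))\<^sup>2 * (1 + reg_len T H l (coset_rep G H C)) powr (2 * s))"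
    (is "integral\<^sup>L \<nu> ?g1 \<le> integral\<^sup>L \<nu> ?g2")
proof -
  have int2: "integrable \<nu> ?g2" using integrable_RD_weight[OF qm f s] .
  have le: "?g1 C \<le> ?g2 C" if "C \<in> space \<nu>" for C
  proof -
    have rc: "coset_rep G H C \<in> carrier G"
      using coset_rep(1)[OF grp sg] that quot_measureD(2)[OF grp sg ts qm] by blast
    have "0 \<le> l (coset_rep G H C)" using length_fnD(2)[OF len rc] .
    then have "(1 + l (coset_rep G H C)) powr (2 * s) \<le> (1 + reg_len T H l (coset_rep G H C)) powr (2 * s)"
      using reg_len_ge[OF rc] s by (intro powr_mono2) auto
    then show ?thesis by (intro mult_left_mono) auto
  qed
  show ?thesis
  proof (cases "integrable \<nu> ?g1")
    case True
    then show ?thesis using integral_mono[OF True int2 le] by simp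
  next
    case False
    then have "integral\<^sup>L \<nu> ?g1 = 0" by (rule not_integrable_integral_eq)
    moreover have "0 \<le> integral\<^sup>L \<nu> ?g2" by (rule Bochner_Integration.integral_nonneg) simp
    ultimately show ?thesis by simp
  qed
qed

end

context normal_quotient
begin

definition quot_len :: "('a \<Rightarrow> real) \<Rightarrow> 'a set \<Rightarrow> real" where
  "quot_len l Y = reg_len T H l (coset_rep G N Y)"

lemma quot_len_rcos:
  assumes "bounded_length G T H l" and x: "x \<in> carrier G"
  shows "quot_len l (N #> x) = reg_len T H l x"
proof -
  interpret r: bounded_length G T H l by fact
  obtain n where "n \<in> N" "coset_rep G N (N #> x) = n \<otimes> x" using coset_rep_r_coset[OF grp sgN x] by blast
  then show ?thesis unfolding quot_len_def using r.reg_len_H_invariant(1)[of n x] x NH by auto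
qed

lemma quot_len_coset_rep:
  assumes "bounded_length G T H l" and C2: "C2 \<in> rcosets\<^bsub>G'\<^esub> H'"
  shows "quot_len l (coset_rep G' H' C2) = reg_len T H l (coset_rep G H (union_rcos C2))"
proof -
  interpret r: bounded_length G T H l by fact
  let ?Y = "coset_rep G' H' C2"
  have Y: "?Y \<in> C2" "?Y \<in> carrier G'" using coset_rep[OF grp' subgroup_H' C2] by auto
  then have "coset_rep G N ?Y \<in> ?Y" using coset_rep(3)[OF grp sgN] carrier_quotient by simp
  then have "coset_rep G N ?Y \<in> union_rcos C2" using Y unfolding union_rcos_def by blast
  then show ?thesis
    unfolding quot_len_def using r.reg_len_coset_rep[OF sg order_refl union_rcos_rcosets[OF C2]] by simp
qed

lemma length_fn_quot_len:
  assumes "bounded_length G T H l"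
  shows "length_fn G' TN H' (quot_len l)"
  unfolding length_fn_def
proof (intro conjI ballI)
  interpret r: bounded_length G T H l by fact
  note l2N = quot_len_rcos[OF assms]
  show "quot_len l \<in> borel_measurable (borel_of TN)"
    unfolding quot_len_def using r.reg_len_measurable[OF sgN NH] .
  fix Y assume Y: "Y \<in> carrier G'"
  obtain y where y: "y \<in> carrier G" "Y = N #> y" using coset_rep_N[OF Y] by blast
  show "0 \<le> quot_len l Y" using y l2N r.reg_len_nonneg by simp
  show "quot_len l (inv\<^bsub>G'\<^esub> Y) = quot_len l Y"
    using y l2N inv_rcos_quotient r.reg_len_inv group.inv_closed[OF grp y(1)] by simp
  fix Z assume Z: "Z \<in> carrier G'"
  obtain z where z: "z \<in> carrier G" "Z = N #> z" using coset_rep_N[OF Z] by blast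
  show "quot_len l (Y \<otimes>\<^bsub>G'\<^esub> Z) \<le> quot_len l Y + quot_len l Z"
    using y z rcos_mult_quotient l2N r.reg_len_subadd monoid.m_closed[OF group.is_monoid[OF grp] y(1) z(1)]
    by simp
next
  interpret r: bounded_length G T H l by fact
  have "N \<in> rcosets N" using subgroup.subgroup_in_rcosets[OF sgN grp] .
  then have "coset_rep G N N \<in> N" using coset_rep(3)[OF grp sgN] by blast
  then show "quot_len l \<one>\<^bsub>G'\<^esub> = 0" unfolding quot_len_def using r.reg_len_H NH by auto
next
  interpret r: bounded_length G T H l by fact
  fix h assume "h \<in> H'"
  then show "quot_len l h = 0" unfolding quot_len_def using coset_rep_N_H r.reg_len_H by simp
qed

lemma locally_bounded_quot_len:
  assumes "bounded_length G T H l"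
  shows "locally_bounded_len G' TN H' (quot_len l)"
  unfolding locally_bounded_len_def
proof (intro allI impI)
  interpret r: bounded_length G T H l by fact
  fix K2 assume K2: "compactin (quot_top G' TN H') K2"
  have K2s: "K2 \<subseteq> rcosets\<^bsub>G'\<^esub> H'"
    using compactin_subset_topspace[OF K2] topspace_quot_top[OF grp' subgroup_H' topspace_TN] by simp
  have "compactin (quot_top G T H) (union_rcos ` K2)"
    using image_compactin[OF K2 continuous_map_union_rcos] .
  then obtain B where "\<forall>C\<in>union_rcos ` K2. reg_len T H l (coset_rep G H C) \<le> B"
    using r.reg_len_compact_bound by blast
  then have "\<forall>C2\<in>K2. quot_len l (coset_rep G' H' C2) \<le> B"
    using quot_len_coset_rep[OF assms] K2s by auto
  then show "\<exists>B. \<forall>C\<in>K2. quot_len l (coset_rep G' H' C) \<le> B" by blast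
qed

definition lift_len :: "('a set \<Rightarrow> real) \<Rightarrow> 'a \<Rightarrow> real" where
  "lift_len l2 x = l2 (N #> x)"

lemma lift_len_coset_rep:
  assumes len2: "length_fn G' TN H' l2" and C: "C \<in> rcosets H"
  shows "l2 (coset_rep G' H' (proj_rcos C)) = lift_len l2 (coset_rep G H C)"
proof -
  have r: "coset_rep G H C \<in> carrier G" "C = H #> coset_rep G H C" using coset_rep[OF grp sg C] by auto
  have "proj_rcos C = H' #>\<^bsub>G'\<^esub> (N #> coset_rep G H C)" using proj_rcos_coset[OF r(1)] r(2) by simp
  then obtain h where h: "h \<in> H'" "coset_rep G' H' (proj_rcos C) = h \<otimes>\<^bsub>G'\<^esub> (N #> coset_rep G H C)"
    using coset_rep_r_coset[OF grp' subgroup_H' rcos_in_quotient[OF r(1)]] by metis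
  then show ?thesis
    unfolding lift_len_def
    using length_fn_H_invariant(1)[OF len2 grp' subgroup_H' h(1) rcos_in_quotient[OF r(1)]] by simp
qed

lemma length_fn_lift_len:
  assumes len2: "length_fn G' TN H' l2"
  shows "length_fn G T H (lift_len l2)"
  unfolding length_fn_def
proof (intro conjI ballI)
  note lb = length_fnD[OF len2]
  have "(\<lambda>x. N #> x) \<in> borel_of T \<rightarrow>\<^sub>M borel_of TN"
    using continuous_map_measurable[OF continuous_map_quot_top_proj[OF lcg sgN]] .
  then show "lift_len l2 \<in> borel_measurable (borel_of T)"
    unfolding lift_len_def using lb(1) by (rule measurable_compose)
  fix x assume x: "x \<in> carrier G"
  show "0 \<le> lift_len l2 x" unfolding lift_len_def using lb(2) rcos_in_quotient[OF x] .
  show "lift_len l2 (inv x) = lift_len l2 x"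
    unfolding lift_len_def using inv_rcos_quotient[OF x] lb(4)[OF rcos_in_quotient[OF x]] by simp
  fix y assume y: "y \<in> carrier G"
  show "lift_len l2 (x \<otimes> y) \<le> lift_len l2 x + lift_len l2 y"
    unfolding lift_len_def
    using rcos_mult_quotient[OF x y] lb(5)[OF rcos_in_quotient[OF x] rcos_in_quotient[OF y]] by simp
next
  note lb = length_fnD[OF len2]
  have "N #> \<one> = N" using group.coset_mult_one[OF grp subgroup.subset[OF sgN]] .
  then show "lift_len l2 \<one> = 0" unfolding lift_len_def using lb(3) by simp
next
  note lb = length_fnD[OF len2]
  fix h assume "h \<in> H"
  then have "N #> h \<in> H'" unfolding quot_sub_def by blast
  then show "lift_len l2 h = 0" unfolding lift_len_def using lb(6) by simp
qed

lemma locally_bounded_lift_len: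
  assumes len2: "length_fn G' TN H' l2" and lb2: "locally_bounded_len G' TN H' l2"
  shows "locally_bounded_len G T H (lift_len l2)"
  unfolding locally_bounded_len_def
proof (intro allI impI)
  fix K assume K: "compactin (quot_top G T H) K"
  have Ks: "K \<subseteq> rcosets H" using compactin_subset_topspace[OF K] topspace_quot_top[OF grp sg ts] by simp
  have "compactin (quot_top G' TN H') (proj_rcos ` K)"
    using image_compactin[OF K continuous_map_proj_rcos] .
  then obtain B where "\<forall>C2\<in>proj_rcos ` K. l2 (coset_rep G' H' C2) \<le> B"
    using lb2 unfolding locally_bounded_len_def by blast
  then have "\<forall>C\<in>K. lift_len l2 (coset_rep G H C) \<le> B"
    using lift_len_coset_rep[OF len2] Ks by fastforce
  then show "\<exists>B. \<forall>C\<in>K. lift_len l2 (coset_rep G H C) \<le> B" by blast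
qed

lemma has_RD_quotient:
  assumes cl: "closedin T H" and rd: "has_RD G T H"
  shows "has_RD G' TN H'"
proof -
  interpret i: coset_space_iso G T H G' TN H' proj_rcos union_rcos "\<lambda>g. N #> g"
    by (rule coset_space_iso_proj)
  obtain \<nu> l s c where qm: "quot_measure G T H \<nu>" and len: "length_fn G T H l"
    and lb: "locally_bounded_len G T H l" and sc: "s > 0" "c > 0"
    and bnd: "\<forall>f\<in>hecke_alg G T H. lambda_norm G H \<nu> f \<le>
        c * sqrt (LINT C|\<nu>. (cmod (f C))\<^sup>2 * (1 + l (coset_rep G H C)) powr (2 * s))"
    using rd unfolding has_RD_def by blast
  have r: "bounded_length G T H l" by (rule bounded_length.intro[OF lcg sg cl len lb])
  let ?\<nu>2 = "distr \<nu> (borel_of (quot_top G' TN H')) proj_rcos"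
  have "lambda_norm G' H' ?\<nu>2 f2 \<le>
      c * sqrt (LINT C|?\<nu>2. (cmod (f2 C))\<^sup>2 * (1 + quot_len l (coset_rep G' H' C)) powr (2 * s))"
    if f2: "f2 \<in> hecke_alg G' TN H'" for f2
  proof -
    let ?f = "\<lambda>C. f2 (proj_rcos C)"
    have f: "?f \<in> hecke_alg G T H" using i.hecke_alg_pullback[OF f2] .
    have "lambda_norm G' H' ?\<nu>2 f2 = lambda_norm G H \<nu> ?f"
      using i.lambda_norm_distr[OF qm] f2 unfolding hecke_alg_def by blast
    also have "\<dots> \<le> c * sqrt (LINT C|\<nu>. (cmod (?f C))\<^sup>2 * (1 + l (coset_rep G H C)) powr (2 * s))"
      using bnd f by blast
    also have "\<dots> \<le> c * sqrt (LINT C|\<nu>. (cmod (?f C))\<^sup>2 * (1 + reg_len T H l (coset_rep G H C)) powr (2 * s))"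
      using bounded_length.RD_integral_le_reg_len[OF r qm f] sc by (intro mult_left_mono) auto
    also have "\<dots> = c * sqrt (LINT C|?\<nu>2. (cmod (f2 C))\<^sup>2 * (1 + quot_len l (coset_rep G' H' C)) powr (2 * s))"
      using i.RD_integral_distr[OF qm, of "quot_len l" "reg_len T H l" f2 s]
        quot_len_coset_rep[OF r proj_rcos_rcosets] union_proj_rcos by simp
    finally show ?thesis .
  qed
  then show ?thesis
    unfolding has_RD_def
    using i.quot_measure_distr[OF qm] length_fn_quot_len[OF r] locally_bounded_quot_len[OF r] sc by blast
qed

lemma has_RD_from_quotient:
  assumes rd: "has_RD G' TN H'"
  shows "has_RD G T H"
proof -
  interpret i: coset_space_iso G' TN H' G T H union_rcos proj_rcos "coset_rep G N"
    by (rule coset_space_iso_lift)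
  obtain \<nu>2 l2 s c where qm2: "quot_measure G' TN H' \<nu>2" and len2: "length_fn G' TN H' l2"
    and lb2: "locally_bounded_len G' TN H' l2" and sc: "s > 0" "c > 0"
    and bnd: "\<forall>f\<in>hecke_alg G' TN H'. lambda_norm G' H' \<nu>2 f \<le>
        c * sqrt (LINT C|\<nu>2. (cmod (f C))\<^sup>2 * (1 + l2 (coset_rep G' H' C)) powr (2 * s))"
    using rd unfolding has_RD_def by blast
  let ?\<nu> = "distr \<nu>2 (borel_of (quot_top G T H)) union_rcos"
  have "lambda_norm G H ?\<nu> f \<le>
      c * sqrt (LINT C|?\<nu>. (cmod (f C))\<^sup>2 * (1 + lift_len l2 (coset_rep G H C)) powr (2 * s))"
    if f: "f \<in> hecke_alg G T H" for f
  proof -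
    let ?f2 = "\<lambda>C. f (union_rcos C)"
    have f2: "?f2 \<in> hecke_alg G' TN H'" using i.hecke_alg_pullback[OF f] .
    have "lambda_norm G H ?\<nu> f = lambda_norm G' H' \<nu>2 ?f2"
      using i.lambda_norm_distr[OF qm2] f unfolding hecke_alg_def by blast
    also have "\<dots> \<le> c * sqrt (LINT C|\<nu>2. (cmod (?f2 C))\<^sup>2 * (1 + l2 (coset_rep G' H' C)) powr (2 * s))"
      using bnd f2 by blast
    also have "\<dots> = c * sqrt (LINT C|?\<nu>. (cmod (f C))\<^sup>2 * (1 + lift_len l2 (coset_rep G H C)) powr (2 * s))"
      using i.RD_integral_distr[OF qm2, of "lift_len l2" l2 f s]
        lift_len_coset_rep[OF len2 union_rcos_rcosets] proj_union_rcos by simp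
    finally show ?thesis .
  qed
  then show ?thesis
    unfolding has_RD_def
    using i.quot_measure_distr[OF qm2] length_fn_lift_len[OF len2] locally_bounded_lift_len[OF len2 lb2] sc
    by blast
qed

end

lemma has_RD_quotient_iff:
  fixes G :: "('a, 'b) monoid_scheme"
  assumes "lc_group G T" "subgroup H G" "closedin T H" "N \<lhd> G" "N \<subseteq> H"
  shows "has_RD G T H \<longleftrightarrow> has_RD (G Mod N) (quot_top G T N) (quot_sub G N H)"
proof -
  interpret q: normal_quotient G T H N by (rule normal_quotient.intro[OF assms(1,2,4,5)])
  show ?thesis using q.has_RD_quotient[OF assms(3)] q.has_RD_from_quotient by blast
qed

section \<open>The normal core\<close>

lemma mult_inv_mult_cancel:
  fixes G (structure)
  assumes "group G" "x \<in> carrier G" "y \<in> carrier G"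
  shows "x \<otimes> (inv x \<otimes> y) = y" "inv x \<otimes> (x \<otimes> y) = y"
proof -
  interpret group G by fact
  show "x \<otimes> (inv x \<otimes> y) = y" using assms by (simp add: m_assoc[symmetric])
  show "inv x \<otimes> (x \<otimes> y) = y" using assms by (simp add: m_assoc[symmetric])
qed

lemma mem_conj_coset_iff:
  fixes G (structure)
  assumes "group G" "x \<in> carrier G" and Hc: "H \<subseteq> carrier G"
  shows "k \<in> x <# H #> inv x \<longleftrightarrow> k \<in> carrier G \<and> inv x \<otimes> k \<otimes> x \<in> H"
proof -
  interpret group G by fact
  have "k \<in> x <# H #> inv x \<longleftrightarrow> (\<exists>h\<in>H. k = x \<otimes> h \<otimes> inv x)"
    unfolding l_coset_def r_coset_def by blast
  also have "\<dots> \<longleftrightarrow> k \<in> carrier G \<and> inv x \<otimes> k \<otimes> x \<in> H"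
  proof
    assume "\<exists>h\<in>H. k = x \<otimes> h \<otimes> inv x"
    then obtain h where h: "h \<in> H" "k = x \<otimes> h \<otimes> inv x" by blast
    have hc: "h \<in> carrier G" using h(1) Hc by blast
    have "inv x \<otimes> k \<otimes> x = h" using h(2) hc assms(2) by (simp add: m_assoc mult_inv_mult_cancel[OF assms(1)])
    then show "k \<in> carrier G \<and> inv x \<otimes> k \<otimes> x \<in> H" using h hc assms(2) by simp
  next
    assume k: "k \<in> carrier G \<and> inv x \<otimes> k \<otimes> x \<in> H"
    have "x \<otimes> (inv x \<otimes> k \<otimes> x) \<otimes> inv x = k" using k assms(2) by (simp add: m_assoc mult_inv_mult_cancel[OF assms(1)])
    then show "\<exists>h\<in>H. k = x \<otimes> h \<otimes> inv x" using k by metis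
  qed
  finally show ?thesis .
qed

lemma normal_core_eq:
  fixes G (structure)
  assumes "group G" "subgroup H G"
  shows "(\<Inter>x\<in>carrier G. x <# H #> inv x) = {k \<in> carrier G. \<forall>x\<in>carrier G. inv x \<otimes> k \<otimes> x \<in> H}"
proof -
  interpret group G by fact
  show ?thesis using mem_conj_coset_iff[OF assms(1) _ subgroup.subset[OF assms(2)]] one_closed by blast
qed

lemma subgroup_normal_core:
  fixes G (structure)
  assumes grp: "group G" and sg: "subgroup H G"
  shows "subgroup (\<Inter>x\<in>carrier G. x <# H #> inv x) G"
  unfolding normal_core_eq[OF assms]
proof (rule group.subgroupI[OF grp])
  interpret group G by fact
  show "{k \<in> carrier G. \<forall>x\<in>carrier G. inv x \<otimes> k \<otimes> x \<in> H} \<noteq> {}"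
    using subgroup.one_closed[OF sg] by auto
  fix a b assume a: "a \<in> {k \<in> carrier G. \<forall>x\<in>carrier G. inv x \<otimes> k \<otimes> x \<in> H}"
    and b: "b \<in> {k \<in> carrier G. \<forall>x\<in>carrier G. inv x \<otimes> k \<otimes> x \<in> H}"
  have "inv x \<otimes> inv a \<otimes> x \<in> H" if x: "x \<in> carrier G" for x
  proof -
    have "inv (inv x \<otimes> a \<otimes> x) \<in> H" using a x subgroup.m_inv_closed[OF sg] by blast
    moreover have "inv (inv x \<otimes> a \<otimes> x) = inv x \<otimes> inv a \<otimes> x"
      using a x by (simp add: inv_mult_group m_assoc mult_inv_mult_cancel[OF grp])
    ultimately show ?thesis by simp
  qed
  then show "inv a \<in> {k \<in> carrier G. \<forall>x\<in>carrier G. inv x \<otimes> k \<otimes> x \<in> H}" using a by simp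
  have "inv x \<otimes> (a \<otimes> b) \<otimes> x \<in> H" if x: "x \<in> carrier G" for x
  proof -
    have "(inv x \<otimes> a \<otimes> x) \<otimes> (inv x \<otimes> b \<otimes> x) \<in> H" using a b x subgroup.m_closed[OF sg] by blast
    moreover have "(inv x \<otimes> a \<otimes> x) \<otimes> (inv x \<otimes> b \<otimes> x) = inv x \<otimes> (a \<otimes> b) \<otimes> x"
      using a b x by (simp add: m_assoc mult_inv_mult_cancel[OF grp])
    ultimately show ?thesis by simp
  qed
  then show "a \<otimes> b \<in> {k \<in> carrier G. \<forall>x\<in>carrier G. inv x \<otimes> k \<otimes> x \<in> H}" using a b by simp
qed (auto)

lemma normal_core:
  fixes G (structure)
  assumes grp: "group G" and sg: "subgroup H G"
  shows "(\<Inter>x\<in>carrier G. x <# H #> inv x) \<lhd> G" "(\<Inter>x\<in>carrier G. x <# H #> inv x) \<subseteq> H"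
proof -
  interpret group G by fact
  note K = normal_core_eq[OF assms]
  have "\<forall>g\<in>carrier G. \<forall>k\<in>(\<Inter>x\<in>carrier G. x <# H #> inv x). g \<otimes> k \<otimes> inv g \<in> (\<Inter>x\<in>carrier G. x <# H #> inv x)"
  proof (intro ballI)
    fix g k assume g: "g \<in> carrier G" and k: "k \<in> (\<Inter>x\<in>carrier G. x <# H #> inv x)"
    have "inv x \<otimes> (g \<otimes> k \<otimes> inv g) \<otimes> x \<in> H" if x: "x \<in> carrier G" for x
    proof -
      have "inv (inv g \<otimes> x) \<otimes> k \<otimes> (inv g \<otimes> x) \<in> H" using k g x unfolding K by simp
      moreover have "inv (inv g \<otimes> x) \<otimes> k \<otimes> (inv g \<otimes> x) = inv x \<otimes> (g \<otimes> k \<otimes> inv g) \<otimes> x"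
        using g k x unfolding K by (simp add: inv_mult_group m_assoc mult_inv_mult_cancel[OF grp])
      ultimately show ?thesis by simp
    qed
    then show "g \<otimes> k \<otimes> inv g \<in> (\<Inter>x\<in>carrier G. x <# H #> inv x)" using g k unfolding K by simp
  qed
  then show "(\<Inter>x\<in>carrier G. x <# H #> inv x) \<lhd> G"
    using subgroup_normal_core[OF assms] normal_inv_iff by blast
  show "(\<Inter>x\<in>carrier G. x <# H #> inv x) \<subseteq> H"
  proof
    fix k assume "k \<in> (\<Inter>x\<in>carrier G. x <# H #> inv x)"
    then have "inv \<one> \<otimes> k \<otimes> \<one> \<in> H" "k \<in> carrier G" unfolding K by auto
    then show "k \<in> H" by simp
  qed
qed

theorem lemma3p11:
  fixes G :: "('a, 'b) monoid_scheme" and T :: "'a topology" and H N :: "'a set"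
  shows "(hecke_pair G T H \<and> N \<lhd> G \<and> closedin T N \<and> N \<subseteq> H \<longrightarrow>
            (has_RD G T H \<longleftrightarrow> has_RD (G Mod N) (quot_top G T N) (quot_sub G N H)))
       \<and> (\<forall>(G2 :: ('a, 'b) monoid_scheme) H2.
            hecke_pair G2 (discrete_topology (carrier G2)) H2 \<longrightarrow>
            (let K = (\<Inter>x \<in> carrier G2. x <#\<^bsub>G2\<^esub> H2 #>\<^bsub>G2\<^esub> inv\<^bsub>G2\<^esub> x) in
              has_RD G2 (discrete_topology (carrier G2)) H2 \<longleftrightarrow>
              has_RD (G2 Mod K) (quot_top G2 (discrete_topology (carrier G2)) K) (quot_sub G2 K H2)))"
proof (intro conjI impI allI)
  assume "hecke_pair G T H \<and> N \<lhd> G \<and> closedin T N \<and> N \<subseteq> H"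
  then show "has_RD G T H \<longleftrightarrow> has_RD (G Mod N) (quot_top G T N) (quot_sub G N H)"
    using has_RD_quotient_iff unfolding hecke_pair_def by blast
next
  fix G2 :: "('a, 'b) monoid_scheme" and H2
  assume "hecke_pair G2 (discrete_topology (carrier G2)) H2"
  then have hp: "lc_group G2 (discrete_topology (carrier G2))" "subgroup H2 G2"
    "closedin (discrete_topology (carrier G2)) H2"
    unfolding hecke_pair_def by auto
  then have "group G2" unfolding lc_group_def by blast
  then show "let K = (\<Inter>x \<in> carrier G2. x <#\<^bsub>G2\<^esub> H2 #>\<^bsub>G2\<^esub> inv\<^bsub>G2\<^esub> x) in
      has_RD G2 (discrete_topology (carrier G2)) H2 \<longleftrightarrow>
      has_RD (G2 Mod K) (quot_top G2 (discrete_topology (carrier G2)) K) (quot_sub G2 K H2)"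
    unfolding Let_def using has_RD_quotient_iff[OF hp] normal_core[OF _ hp(2)] by blast
qed

end
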